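(* Let $r\ge2$ be an even integer and $a<b$. On a time interval $I$, let $Q_1(t),\dots,Q_n(t)$ and $P_1(t),\dots,P_n(t)$ be differentiable with $a=Q_0<Q_1(t)<\dots<Q_n(t)<Q_{n+1}=b$, solving $$\dot Q_i=\hat u_i,\qquad \dot P_i=\frac{r-1}{r}\left(\left|\frac{\hat u_{i+1}-\hat u_i}{Q_{i+1}-Q_i}\right|^r-\left|\frac{\hat u_i-\hat u_{i-1}}{Q_i-Q_{i-1}}\right|^r\right),\quad i=1,\dots,n,$$ where $(\hat u_0,\dots,\hat u_{n+1})$, with $\hat u_0=\hat u_{n+1}=0$, is the unique solution of $$P_i=-\left|\frac{\hat u_{i+1}-\hat u_i}{Q_{i+1}-Q_i}\right|^{r-2}\frac{\hat u_{i+1}-\hat u_i}{Q_{i+1}-Q_i}+\left|\frac{\hat u_i-\hat u_{i-1}}{Q_i-Q_{i-1}}\right|^{r-2}\frac{\hat u_i-\hat u_{i-1}}{Q_i-Q_{i-1}},\quad i=1,\dots,n.$$ Let $u(\cdot,t)$ be the continuous function on $[a,b]$ that is linear on each $[Q_i(t),Q_{i+1}(t)]$ with $u(Q_i(t),t)=\hat u_i(t)$. Then there is a function $c(t)$ such that, for every $\phi\in W^{1,r}_0(a,b)$ (independent of $t$) and $t\in I$, $$\frac{d}{dt}\int_a^b|u_x|^{r-2}u_x\,\phi\,dx-\int_a^b\frac1r|u_x|^r\phi\,dx-\int_a^b u\,|u_x|^{r-2}u_x\,\phi_x\,dx=c(t)\int_a^b\phi\,dx,$$ i.e. $u$ is a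 weak solution of $\big(|u_x|^{r-2}u_x\big)_t+\big(|u_x|^{r-2}uu_x\big)_x=\frac1r|u_x|^r+c(t)$.
   Context: $W^{1,r}_0(a,b)$ is the space of functions with $\int_a^b|u|^r+|u_x|^r\,dx<\infty$ and $u(a)=u(b)=0$. The weak form is $\int_a^b\big((|u_x|^{r-2}u_x)_t-\frac1r|u_x|^r\big)\phi-u|u_x|^{r-2}u_x\phi_x\,dx=c(t)\int_a^b\phi\,dx$ for all test functions $\phi$, where for the piecewise linear $u$ the term $\int_a^b(|u_x|^{r-2}u_x)_t\phi\,dx$ is understood as $\frac{d}{dt}\int_a^b|u_x|^{r-2}u_x\phi\,dx$. *)

theory Defs
  imports "HOL-Analysis.Analysis"
begin

definition test_fun :: "real \<Rightarrow> real \<Rightarrow> (real \<Rightarrow> real) \<Rightarrow> bool" where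
  "test_fun a b \<psi> \<longleftrightarrow>
     (\<forall>k x. ((deriv ^^ k) \<psi>) differentiable (at x)) \<and>
     (\<exists>c d. a < c \<and> d < b \<and> (\<forall>x. x \<notin> {c..d} \<longrightarrow> \<psi> x = 0))"

definition weak_deriv_on :: "real \<Rightarrow> real \<Rightarrow> (real \<Rightarrow> real) \<Rightarrow> (real \<Rightarrow> real) \<Rightarrow> bool" where
  "weak_deriv_on a b f g \<longleftrightarrow>
     f absolutely_integrable_on {a..b} \<and> g absolutely_integrable_on {a..b} \<and>
     (\<forall>\<psi>. test_fun a b \<psi> \<longrightarrow>
        integral {a..b} (\<lambda>x. f x * deriv \<psi> x) = - integral {a..b} (\<lambda>x. g x * \<psi> x))"

text \<open>phi belongs to W^{1,r}_0(a,b) with weak derivative phi_x = g: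
  int_a^b |phi|^r + |phi_x|^r < infinity and phi(a) = phi(b) = 0, where phi is
  taken to be the continuous representative on [a,b].\<close>
definition W1r0 :: "nat \<Rightarrow> real \<Rightarrow> real \<Rightarrow> (real \<Rightarrow> real) \<Rightarrow> (real \<Rightarrow> real) \<Rightarrow> bool" where
  "W1r0 r a b \<phi> g \<longleftrightarrow>
     continuous_on {a..b} \<phi> \<and> weak_deriv_on a b \<phi> g \<and>
     (\<lambda>x. \<bar>\<phi> x\<bar> ^ r) integrable_on {a..b} \<and>
     (\<lambda>x. \<bar>g x\<bar> ^ r) integrable_on {a..b} \<and>
     \<phi> a = 0 \<and> \<phi> b = 0"

end

theory Submission
  imports Defs "HOL-Computational_Algebra.Polynomial"
begin

definition differentiable_upto :: "nat \<Rightarrow> (real \<Rightarrow> real) \<Rightarrow> bool" where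
  "differentiable_upto k f \<longleftrightarrow> (\<forall>j\<le>k. \<forall>x. ((deriv ^^ j) f) differentiable (at x))"

lemma differentiable_upto_0: "differentiable_upto 0 f \<longleftrightarrow> (\<forall>x. f differentiable (at x))"
  by (simp add: differentiable_upto_def)

lemma differentiable_upto_Suc:
  "differentiable_upto (Suc k) f \<longleftrightarrow> (\<forall>x. f differentiable (at x)) \<and> differentiable_upto k (deriv f)"
proof -
  have "(\<forall>j\<le>Suc k. P j) \<longleftrightarrow> P 0 \<and> (\<forall>j\<le>k. P (Suc j))" for P :: "nat \<Rightarrow> bool"
    by (metis Suc_le_mono le0 not0_implies_Suc)
  moreover have "(deriv ^^ Suc j) f = (deriv ^^ j) (deriv f)" for j
    by (simp add: funpow_Suc_right del: funpow.simps)
  ultimately show ?thesis by (simp add: differentiable_upto_def del: funpow.simps)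
qed

lemma differentiable_upto_DERIV: "differentiable_upto k f \<Longrightarrow> DERIV f x :> deriv f x"
  by (cases k) (auto simp: differentiable_upto_0 differentiable_upto_Suc DERIV_deriv_iff_real_differentiable)

lemma differentiable_upto_Suc_D: "differentiable_upto (Suc k) f \<Longrightarrow> differentiable_upto k f"
  by (simp add: differentiable_upto_def)

lemma differentiable_upto_DERIV_iff:
  assumes "\<And>x. DERIV f x :> f' x"
  shows "differentiable_upto (Suc k) f \<longleftrightarrow> differentiable_upto k f'"
proof -
  have "deriv f = f'" using assms DERIV_imp_deriv by blast
  then show ?thesis using assms by (auto simp: differentiable_upto_Suc real_differentiable_def)
qed

lemma differentiable_upto_const: "differentiable_upto k (\<lambda>x. c)"
proof (induction k arbitrary: c)
  case (Suc k)
  then show ?case using differentiable_upto_DERIV_iff[of "\<lambda>x. c" "\<lambda>x. 0"] by simp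
qed (simp add: differentiable_upto_0)

lemma differentiable_upto_ident: "differentiable_upto k (\<lambda>x. x)"
  by (cases k) (simp_all add: differentiable_upto_0 differentiable_upto_const
      differentiable_upto_DERIV_iff[of _ "\<lambda>x. 1"])

lemma differentiable_upto_add:
  "differentiable_upto k f \<Longrightarrow> differentiable_upto k g \<Longrightarrow> differentiable_upto k (\<lambda>x. f x + g x)"
proof (induction k arbitrary: f g)
  case (Suc k)
  have "differentiable_upto k (\<lambda>x. deriv f x + deriv g x)"
    using Suc by (simp add: differentiable_upto_Suc)
  then show ?case
    by (subst differentiable_upto_DERIV_iff[OF DERIV_add[OF differentiable_upto_DERIV differentiable_upto_DERIV]])
      (use Suc.prems in auto)
qed (simp add: differentiable_upto_0)

lemma differentiable_upto_mult:
  "differentiable_upto k f \<Longrightarrow> differentiable_upto k g \<Longrightarrow> differentiable_upto k (\<lambda>x. f x * g x)"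
proof (induction k arbitrary: f g)
  case (Suc k)
  have "differentiable_upto k (\<lambda>x. deriv f x * g x + deriv g x * f x)"
    using Suc by (intro differentiable_upto_add Suc.IH)
      (auto simp: differentiable_upto_Suc intro: differentiable_upto_Suc_D)
  then show ?case
    by (subst differentiable_upto_DERIV_iff[OF DERIV_mult[OF differentiable_upto_DERIV differentiable_upto_DERIV]])
      (use Suc.prems in auto)
qed (simp add: differentiable_upto_0)

lemma differentiable_upto_diff:
  "differentiable_upto k f \<Longrightarrow> differentiable_upto k g \<Longrightarrow> differentiable_upto k (\<lambda>x. f x - g x)"
  using differentiable_upto_add[of k f "\<lambda>x. (-1) * g x"] differentiable_upto_mult differentiable_upto_const
  by fastforce

lemma differentiable_upto_compose_affine:
  "differentiable_upto k f \<Longrightarrow> differentiable_upto k (\<lambda>x. f (\<alpha> * x + \<beta>))"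
proof (induction k arbitrary: f)
  case 0
  have "DERIV (\<lambda>x. f (\<alpha> * x + \<beta>)) x :> deriv f (\<alpha> * x + \<beta>) * \<alpha>" for x
    by (rule DERIV_chain2[OF differentiable_upto_DERIV[OF 0]]) (auto intro!: derivative_eq_intros)
  then show ?case by (auto simp: differentiable_upto_0 real_differentiable_def)
next
  case (Suc k)
  have D: "DERIV (\<lambda>x. f (\<alpha> * x + \<beta>)) x :> deriv f (\<alpha> * x + \<beta>) * \<alpha>" for x
    by (rule DERIV_chain2[OF differentiable_upto_DERIV[OF Suc.prems]]) (auto intro!: derivative_eq_intros)
  have "differentiable_upto k (\<lambda>x. deriv f (\<alpha> * x + \<beta>) * \<alpha>)"
    using Suc by (intro differentiable_upto_mult differentiable_upto_const Suc.IH)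
      (simp add: differentiable_upto_Suc)
  then show ?case by (simp only: differentiable_upto_DERIV_iff[OF D])
qed

definition exp_inv_poly :: "real poly \<Rightarrow> real \<Rightarrow> real" where
  "exp_inv_poly p x = (if 0 < x then poly p (inverse x) * exp (- inverse x) else 0)"

lemma exp_inv_poly_div_tendsto_0: "((\<lambda>y. exp_inv_poly p y / y) \<longlongrightarrow> 0) (at_right 0)"
proof -
  have "poly p y * y * exp (- y) = (\<Sum>i\<le>degree p. coeff p i * (y ^ Suc i / exp y))" for y
    by (simp add: poly_altdef sum_distrib_left sum_distrib_right exp_minus divide_inverse mult_ac)
  moreover have "((\<lambda>y. \<Sum>i\<le>degree p. coeff p i * (y ^ Suc i / exp y))
      \<longlongrightarrow> (\<Sum>i\<le>degree p. coeff p i * 0)) at_top"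
    by (intro tendsto_sum tendsto_mult tendsto_const tendsto_power_div_exp_0)
  ultimately have "((\<lambda>y. poly p y * y * exp (- y)) \<longlongrightarrow> 0) at_top"
    by simp
  then have "((\<lambda>y. exp_inv_poly p (inverse y) / inverse y) \<longlongrightarrow> 0) at_top"
    by (rule Lim_transform_eventually)
      (use eventually_gt_at_top[of 0] in \<open>eventually_elim, simp add: exp_inv_poly_def field_simps\<close>)
  then show ?thesis
    by (simp add: filterlim_at_right_to_top)
qed

lemma exp_inv_poly_DERIV:
  "DERIV (exp_inv_poly p) x :> exp_inv_poly ([:0, 0, 1:] * (p - pderiv p)) x"
proof (cases x "0::real" rule: linorder_cases)
  case greater
  have "DERIV (\<lambda>y. poly p (inverse y) * exp (- inverse y)) x :>
     poly (pderiv p) (inverse x) * (- (inverse x * inverse x)) * exp (- inverse x)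
     + poly p (inverse x) * (exp (- inverse x) * (inverse x * inverse x))"
    using greater
    by (auto intro!: derivative_eq_intros DERIV_chain2[OF poly_DERIV] simp: power2_eq_square)
  then have "DERIV (\<lambda>y. poly p (inverse y) * exp (- inverse y)) x :>
      exp_inv_poly ([:0, 0, 1:] * (p - pderiv p)) x"
    using greater by (simp add: exp_inv_poly_def algebra_simps)
  then show ?thesis
    by (rule has_field_derivative_transform_within_open[where S="{0<..}"])
      (use greater in \<open>auto simp: exp_inv_poly_def\<close>)
next
  case less
  have "DERIV (\<lambda>y. 0) x :> exp_inv_poly ([:0, 0, 1:] * (p - pderiv p)) x"
    using less by (simp add: exp_inv_poly_def)
  then show ?thesis
    by (rule has_field_derivative_transform_within_open[where S="{..<0}"])
      (use less in \<open>auto simp: exp_inv_poly_def\<close>)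
next
  case equal
  have "((\<lambda>y. exp_inv_poly p y / y) \<longlongrightarrow> 0) (at_left 0)"
    by (rule tendsto_eventually)
      (auto simp: eventually_at_left_field exp_inv_poly_def intro!: exI[of _ "-1"])
  with exp_inv_poly_div_tendsto_0
  have "((\<lambda>y. (exp_inv_poly p y - exp_inv_poly p 0) / (y - 0)) \<longlongrightarrow> 0) (at 0)"
    by (simp add: exp_inv_poly_def filterlim_split_at)
  then show ?thesis using equal by (simp add: has_field_derivative_iff exp_inv_poly_def)
qed

lemma differentiable_upto_exp_inv_poly: "differentiable_upto k (exp_inv_poly p)"
  by (induction k arbitrary: p)
    (auto simp: differentiable_upto_0 differentiable_upto_DERIV_iff[OF exp_inv_poly_DERIV]
      intro: exp_inv_poly_DERIV simp: real_differentiable_def)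

definition bump :: "real \<Rightarrow> real" where
  "bump x = exp_inv_poly 1 x * exp_inv_poly 1 (1 - x)"

lemma differentiable_upto_bump: "differentiable_upto k bump"
proof -
  have "differentiable_upto k (\<lambda>x. exp_inv_poly 1 ((-1) * x + 1))"
    by (rule differentiable_upto_compose_affine[OF differentiable_upto_exp_inv_poly])
  then show ?thesis
    unfolding bump_def by (intro differentiable_upto_mult differentiable_upto_exp_inv_poly) simp
qed

lemma continuous_on_bump: "continuous_on S bump"
  by (rule DERIV_continuous_on, rule has_field_derivative_at_within)
    (rule differentiable_upto_DERIV[OF differentiable_upto_bump[of 0]])

lemma bump_nonneg: "0 \<le> bump x"
  by (simp add: bump_def exp_inv_poly_def)

lemma bump_eq_0: "x \<le> 0 \<or> 1 \<le> x \<Longrightarrow> bump x = 0"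
  by (auto simp: bump_def exp_inv_poly_def)

lemma integrable_bump: "bump integrable_on {u..v}"
  by (rule integrable_continuous_interval[OF continuous_on_bump])

lemma integral_bump_pos: "integral {0..1} bump > 0"
proof -
  have "integral {0..1} bump \<noteq> 0"
  proof
    assume "integral {0..1} bump = 0"
    then have "(bump has_integral 0) (cbox 0 1)"
      using integrable_bump[of 0 1] by (simp add: has_integral_integral)
    then have "bump (1/2) = 0"
      by (intro has_integral_0_cbox_imp_0[OF continuous_on_bump]) (auto simp: bump_nonneg)
    then show False by (simp add: bump_def exp_inv_poly_def)
  qed
  moreover have "integral {0..1} bump \<ge> 0"
    by (rule integral_nonneg[OF integrable_bump bump_nonneg])
  ultimately show ?thesis by simp
qed

definition smooth_step :: "real \<Rightarrow> real" where
  "smooth_step y = integral {-1..y} bump / integral {0..1} bump"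

lemma smooth_step_DERIV: "DERIV smooth_step y :> bump y / integral {0..1} bump"
proof -
  have "DERIV (\<lambda>y. integral {-1..y} bump) y :> bump y"
  proof (cases "y < 0")
    case True
    have "integral {-1..z} bump = 0" if "z < 0" for z
      using integral_cong[of "{-1..z}" bump "\<lambda>_. 0"] that bump_eq_0 by auto
    then show ?thesis
      using has_field_derivative_transform_within_open[of "\<lambda>_. 0" 0 y "{..<0}"] True bump_eq_0
      by auto
  next
    case False
    have "((\<lambda>z. integral {-1..z} bump) has_real_derivative bump y) (at y within {-1..y+1})"
      by (rule integral_has_real_derivative[OF continuous_on_bump]) (use False in auto)
    moreover have "at y within {-1..y+1} = at y"
      by (rule at_within_interior) (use False in auto)
    ultimately show ?thesis by simp
  qed
  then show ?thesis
    unfolding smooth_step_def[abs_def] by (rule DERIV_cdivide)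
qed

lemma differentiable_upto_smooth_step: "differentiable_upto k smooth_step"
proof (cases k)
  case 0
  then show ?thesis
    using smooth_step_DERIV by (auto simp: differentiable_upto_0 real_differentiable_def)
next
  case (Suc j)
  have "differentiable_upto j (\<lambda>y. bump y / integral {0..1} bump)"
    using differentiable_upto_mult[OF differentiable_upto_bump differentiable_upto_const]
    by (simp add: divide_inverse)
  then show ?thesis
    using Suc differentiable_upto_DERIV_iff[OF smooth_step_DERIV] by simp
qed

lemma smooth_step_eq_0: "y \<le> 0 \<Longrightarrow> smooth_step y = 0"
  using integral_cong[of "{-1..y}" bump "\<lambda>_. 0"] bump_eq_0 by (auto simp: smooth_step_def)

lemma smooth_step_eq_1:
  assumes "1 \<le> y" shows "smooth_step y = 1"
proof -
  have "integral {-1..y} bump = integral {-1..0} bump + integral {0..1} bump + integral {1..y} bump"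
    using assms integrable_bump
    by (simp add: Henstock_Kurzweil_Integration.integral_combine)
  moreover have "integral {-1..0} bump = 0" "integral {1..y} bump = 0"
    using integral_cong[of "{-1..0}" bump "\<lambda>_. 0"] integral_cong[of "{1..y}" bump "\<lambda>_. 0"] bump_eq_0
    by auto
  ultimately show ?thesis using integral_bump_pos by (simp add: smooth_step_def)
qed

lemma smooth_step_bounds: "0 \<le> smooth_step y \<and> smooth_step y \<le> 1"
proof (cases "0 < y \<and> y < 1")
  case True
  have "integral {-1..1} bump = integral {-1..y} bump + integral {y..1} bump"
    using True integrable_bump by (simp add: Henstock_Kurzweil_Integration.integral_combine)
  moreover have "integral {-1..y} bump \<ge> 0" "integral {y..1} bump \<ge> 0"
    by (auto intro!: integral_nonneg integrable_bump bump_nonneg)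
  moreover have "integral {-1..1} bump = integral {0..1} bump"
    using smooth_step_eq_1[of 1] integral_bump_pos by (simp add: smooth_step_def)
  ultimately show ?thesis
    using integral_bump_pos by (simp add: smooth_step_def divide_le_eq_1)
qed (auto simp: smooth_step_eq_0 smooth_step_eq_1)

definition ramp :: "real \<Rightarrow> real \<Rightarrow> real \<Rightarrow> real" where
  "ramp c \<epsilon> x = smooth_step ((x - c) / \<epsilon>)"

definition ramp_kernel :: "real \<Rightarrow> real \<Rightarrow> real \<Rightarrow> real" where
  "ramp_kernel c \<epsilon> x = bump ((x - c) / \<epsilon>) / (\<epsilon> * integral {0..1} bump)"

lemma ramp_DERIV:
  assumes "0 < \<epsilon>" shows "DERIV (ramp c \<epsilon>) x :> ramp_kernel c \<epsilon> x"
proof -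
  have "DERIV (\<lambda>x. smooth_step ((x - c) / \<epsilon>)) x :> bump ((x - c) / \<epsilon>) / integral {0..1} bump * (1 / \<epsilon>)"
    by (rule DERIV_chain2[OF smooth_step_DERIV]) (use assms in \<open>auto intro!: derivative_eq_intros\<close>)
  then show ?thesis by (simp add: ramp_def[abs_def] ramp_kernel_def mult.commute)
qed

lemma differentiable_upto_ramp: "differentiable_upto k (ramp c \<epsilon>)"
proof -
  have "differentiable_upto k (\<lambda>x. smooth_step ((1 / \<epsilon>) * x + (- c / \<epsilon>)))"
    by (rule differentiable_upto_compose_affine[OF differentiable_upto_smooth_step])
  moreover have "(\<lambda>x. smooth_step ((1 / \<epsilon>) * x + (- c / \<epsilon>))) = ramp c \<epsilon>"
    by (simp add: ramp_def[abs_def] diff_divide_distrib)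
  ultimately show ?thesis by simp
qed

lemma ramp_eq_0: "0 < \<epsilon> \<Longrightarrow> x \<le> c \<Longrightarrow> ramp c \<epsilon> x = 0"
  by (simp add: ramp_def smooth_step_eq_0 divide_nonpos_pos)

lemma ramp_eq_1: "0 < \<epsilon> \<Longrightarrow> c + \<epsilon> \<le> x \<Longrightarrow> ramp c \<epsilon> x = 1"
  by (simp add: ramp_def smooth_step_eq_1)

lemma ramp_bounds: "0 \<le> ramp c \<epsilon> x \<and> ramp c \<epsilon> x \<le> 1"
  by (simp add: ramp_def smooth_step_bounds)

lemma continuous_on_ramp: "0 < \<epsilon> \<Longrightarrow> continuous_on S (ramp c \<epsilon>)"
  by (rule DERIV_continuous_on[OF has_field_derivative_at_within[OF ramp_DERIV]])

lemma continuous_on_ramp_kernel: "0 < \<epsilon> \<Longrightarrow> continuous_on S (ramp_kernel c \<epsilon>)"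
  unfolding ramp_kernel_def[abs_def] using integral_bump_pos
  by (intro continuous_intros continuous_on_compose2[OF continuous_on_bump, of _ _ UNIV]) auto

lemma ramp_kernel_nonneg: "0 \<le> \<epsilon> \<Longrightarrow> 0 \<le> ramp_kernel c \<epsilon> x"
  using integral_bump_pos by (simp add: ramp_kernel_def bump_nonneg)

lemma ramp_kernel_eq_0: "0 < \<epsilon> \<Longrightarrow> x \<notin> {c<..<c + \<epsilon>} \<Longrightarrow> ramp_kernel c \<epsilon> x = 0"
  by (auto simp: ramp_kernel_def bump_eq_0 divide_le_eq le_divide_eq)

lemma integral_ramp_kernel:
  assumes "0 < \<epsilon>" "a \<le> c" "c + \<epsilon> \<le> b"
  shows "integral {a..b} (ramp_kernel c \<epsilon>) = 1"
proof -
  have "(ramp_kernel c \<epsilon> has_integral (ramp c \<epsilon> b - ramp c \<epsilon> a)) {a..b}"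
    using assms
    by (intro fundamental_theorem_of_calculus)
      (auto simp: has_real_derivative_iff_has_vector_derivative[symmetric]
        intro: has_field_derivative_at_within[OF ramp_DERIV[OF \<open>0 < \<epsilon>\<close>]])
  then show ?thesis using assms by (simp add: integral_unique ramp_eq_0 ramp_eq_1)
qed

lemma kernel_integral_tendsto:
  fixes w :: "real \<Rightarrow> real" and K :: "nat \<Rightarrow> real \<Rightarrow> real"
  assumes w: "continuous_on {a..b} w" and p: "p \<in> {a..b}"
    and K: "\<And>k. continuous_on {a..b} (K k)" "\<And>k x. 0 \<le> K k x" "\<And>k. integral {a..b} (K k) = 1"
    and supp: "\<And>k x. x \<in> {a..b} \<Longrightarrow> K k x \<noteq> 0 \<Longrightarrow> \<bar>x - p\<bar> < \<rho> k"
    and \<rho>: "\<rho> \<longlonglongrightarrow> 0"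
  shows "(\<lambda>k. integral {a..b} (\<lambda>x. w x * K k x)) \<longlonglongrightarrow> w p"
proof (rule tendstoI)
  fix e :: real assume "e > 0"
  then obtain \<delta> where "\<delta> > 0" and \<delta>: "\<And>x. x \<in> {a..b} \<Longrightarrow> dist x p < \<delta> \<Longrightarrow> dist (w x) (w p) < e / 2"
    using w p unfolding continuous_on_iff by (metis half_gt_zero)
  from order_tendstoD(2)[OF \<rho> \<open>\<delta> > 0\<close>]
  show "\<forall>\<^sub>F k in sequentially. dist (integral {a..b} (\<lambda>x. w x * K k x)) (w p) < e"
  proof eventually_elim
    case (elim k)
    have bound: "norm ((w x - w p) * K k x) \<le> e / 2 * K k x" if "x \<in> {a..b}" for x
    proof (cases "K k x = 0")
      case False
      then have "\<bar>w x - w p\<bar> < e / 2"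
        using \<delta> supp elim that by (force simp: dist_real_def)
      then have "\<bar>w x - w p\<bar> * K k x \<le> e / 2 * K k x"
        using K(2)[of k x] by (intro mult_right_mono) auto
      then show ?thesis using K(2)[of k x] by (simp add: abs_mult)
    qed simp
    have "integral {a..b} (\<lambda>x. (w x - w p) * K k x)
        = integral {a..b} (\<lambda>x. w x * K k x) - integral {a..b} (\<lambda>x. w p * K k x)"
      unfolding left_diff_distrib
      by (intro integral_diff integrable_continuous_interval continuous_intros w K(1))
    then have "integral {a..b} (\<lambda>x. w x * K k x) - w p = integral {a..b} (\<lambda>x. (w x - w p) * K k x)"
      using K(3)[of k] by simp
    also have "norm \<dots> \<le> integral {a..b} (\<lambda>x. e / 2 * K k x)"
      using bound
      by (intro integral_norm_bound_integral integrable_continuous_interval continuous_intros w K(1)) auto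
    also have "\<dots> = e / 2" using K(3)[of k] by simp
    finally show ?case using \<open>e > 0\<close> by (simp add: dist_real_def)
  qed
qed

definition plateau :: "real \<Rightarrow> real \<Rightarrow> real \<Rightarrow> real \<Rightarrow> real" where
  "plateau c d \<epsilon> x = ramp (c + \<epsilon>) \<epsilon> x - ramp (d - 2 * \<epsilon>) \<epsilon> x"

lemma plateau_DERIV:
  "0 < \<epsilon> \<Longrightarrow> DERIV (plateau c d \<epsilon>) x :> ramp_kernel (c + \<epsilon>) \<epsilon> x - ramp_kernel (d - 2 * \<epsilon>) \<epsilon> x"
  unfolding plateau_def[abs_def] by (intro DERIV_diff ramp_DERIV)

lemma plateau_eq_0:
  assumes "0 < \<epsilon>" "3 * \<epsilon> \<le> d - c" "x \<le> c + \<epsilon> \<or> d - \<epsilon> \<le> x"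
  shows "plateau c d \<epsilon> x = 0"
  using assms by (auto simp: plateau_def ramp_eq_0 ramp_eq_1)

lemma plateau_eq_1:
  assumes "0 < \<epsilon>" "c + 2 * \<epsilon> \<le> x" "x \<le> d - 2 * \<epsilon>"
  shows "plateau c d \<epsilon> x = 1"
  using assms by (simp add: plateau_def ramp_eq_0 ramp_eq_1)

lemma abs_plateau_le: "\<bar>plateau c d \<epsilon> x\<bar> \<le> 1"
  using ramp_bounds[of "c + \<epsilon>" \<epsilon> x] ramp_bounds[of "d - 2 * \<epsilon>" \<epsilon> x]
  unfolding plateau_def by linarith

lemma test_fun_affine_plateau:
  assumes "a \<le> c" "d \<le> b" "0 < \<epsilon>" "3 * \<epsilon> \<le> d - c"
  shows "test_fun a b (\<lambda>x. (\<alpha> + \<beta> * x) * plateau c d \<epsilon> x)"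
proof -
  have "differentiable_upto k (\<lambda>x. (\<alpha> + \<beta> * x) * plateau c d \<epsilon> x)" for k
    unfolding plateau_def
    by (intro differentiable_upto_mult differentiable_upto_add differentiable_upto_diff
        differentiable_upto_const differentiable_upto_ident differentiable_upto_ramp)
  then have "\<forall>k x. (deriv ^^ k) (\<lambda>x. (\<alpha> + \<beta> * x) * plateau c d \<epsilon> x) differentiable (at x)"
    unfolding differentiable_upto_def by blast
  moreover have "\<forall>x. x \<notin> {c + \<epsilon>..d - \<epsilon>} \<longrightarrow> (\<alpha> + \<beta> * x) * plateau c d \<epsilon> x = 0"
  proof (intro allI impI)
    fix x assume "x \<notin> {c + \<epsilon>..d - \<epsilon>}"
    then have "x \<le> c + \<epsilon> \<or> d - \<epsilon> \<le> x" by auto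
    then show "(\<alpha> + \<beta> * x) * plateau c d \<epsilon> x = 0" by (simp add: plateau_eq_0[OF assms(3,4)])
  qed
  moreover have "a < c + \<epsilon>" "d - \<epsilon> < b" using assms by auto
  ultimately show ?thesis
    unfolding test_fun_def by blast
qed

lemma absolutely_integrable_continuous_mult:
  fixes f g :: "real \<Rightarrow> real"
  assumes "continuous_on {a..b} f" "g absolutely_integrable_on {a..b}"
  shows "(\<lambda>x. f x * g x) absolutely_integrable_on {a..b}"
proof (rule absolutely_integrable_bounded_measurable_product_real)
  show "f \<in> borel_measurable (lebesgue_on {a..b})"
    by (rule continuous_imp_measurable_on_sets_lebesgue[OF assms(1)]) simp
  show "bounded (f ` {a..b})"
    by (rule compact_imp_bounded[OF compact_continuous_image[OF assms(1)]]) simp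
qed (use assms in auto)

lemma plateau_integral_tendsto:
  fixes f :: "real \<Rightarrow> real"
  assumes f: "f absolutely_integrable_on {a..b}" and cd: "a \<le> c" "c < d" "d \<le> b"
    and \<epsilon>: "\<epsilon> \<longlonglongrightarrow> 0" "\<And>k. 0 < \<epsilon> k" "\<And>k. 3 * \<epsilon> k \<le> d - c"
  shows "(\<lambda>k. integral {a..b} (\<lambda>x. f x * plateau c d (\<epsilon> k) x)) \<longlonglongrightarrow> integral {c..d} f"
proof -
  let ?g = "\<lambda>x. if x \<in> {c<..<d} then f x else 0"
  have "(\<lambda>k. f x * plateau c d (\<epsilon> k) x) \<longlonglongrightarrow> ?g x" for x
  proof (cases "x \<in> {c<..<d}")
    case True
    then have "min (x - c) (d - x) / 2 > 0" by simp
    from order_tendstoD(2)[OF \<epsilon>(1) this]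
    have "\<forall>\<^sub>F k in sequentially. f x * plateau c d (\<epsilon> k) x = ?g x"
      by eventually_elim (use True \<epsilon>(2) in \<open>simp add: plateau_eq_1\<close>)
    then show ?thesis by (rule tendsto_eventually)
  next
    case False
    have "x \<le> c + \<epsilon> k \<or> d - \<epsilon> k \<le> x" for k
      using False \<epsilon>(2)[of k] by auto
    then show ?thesis using False plateau_eq_0[OF \<epsilon>(2,3)] by (simp del: greaterThanLessThan_iff)
  qed
  moreover have "(\<lambda>x. plateau c d (\<epsilon> k) x * f x) integrable_on {a..b}" for k
    using absolutely_integrable_continuous_mult[OF _ f] continuous_on_ramp[OF \<epsilon>(2)]
    by (simp add: plateau_def absolutely_integrable_on_def continuous_on_diff)
  moreover have "(\<lambda>x. \<bar>f x\<bar>) integrable_on {a..b}"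
    using f by (simp add: absolutely_integrable_on_def)
  ultimately have "(\<lambda>k. integral {a..b} (\<lambda>x. f x * plateau c d (\<epsilon> k) x)) \<longlonglongrightarrow> integral {a..b} ?g"
    by (intro dominated_convergence(2))
      (auto simp: abs_mult mult_left_le abs_plateau_le mult.commute)
  also have "integral {a..b} ?g = integral ({c<..<d} \<inter> {a..b}) f"
    by (rule integral_restrict_Int)
  also have "{c<..<d} \<inter> {a..b} = {c<..<d}"
    using cd by auto
  finally show ?thesis by (simp add: integral_open_interval_real)
qed

lemma integral_ramp_kernel_tendsto:
  fixes w q \<epsilon> :: "_ \<Rightarrow> real"
  assumes w: "continuous_on {a..b} w" "p \<in> {a..b}" and \<epsilon>: "\<epsilon> \<longlonglongrightarrow> 0" "\<And>k. 0 < \<epsilon> k"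
    and q: "\<And>k. a \<le> q k" "\<And>k. q k + \<epsilon> k \<le> b" "\<And>k. \<bar>q k - p\<bar> \<le> 2 * \<epsilon> k"
  shows "(\<lambda>k. integral {a..b} (\<lambda>x. w x * ramp_kernel (q k) (\<epsilon> k) x)) \<longlonglongrightarrow> w p"
proof (rule kernel_integral_tendsto[OF w _ _ _ _ tendsto_mult_right_zero[OF \<epsilon>(1), of 3]])
  fix k x
  show "continuous_on {a..b} (ramp_kernel (q k) (\<epsilon> k))"
    using \<epsilon>(2) by (rule continuous_on_ramp_kernel)
  show "0 \<le> ramp_kernel (q k) (\<epsilon> k) x"
    using \<epsilon>(2)[of k] by (simp add: ramp_kernel_nonneg)
  show "integral {a..b} (ramp_kernel (q k) (\<epsilon> k)) = 1"
    using \<epsilon>(2) q(1,2) by (rule integral_ramp_kernel)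
  assume "x \<in> {a..b}" "ramp_kernel (q k) (\<epsilon> k) x \<noteq> 0"
  then have "x \<in> {q k<..<q k + \<epsilon> k}"
    using ramp_kernel_eq_0[OF \<epsilon>(2)] by blast
  then show "\<bar>x - p\<bar> < 3 * \<epsilon> k"
    using q(3)[of k] by (simp add: abs_less_iff abs_le_iff)
qed

lemma weak_deriv_plateau_identity:
  fixes \<phi> g :: "real \<Rightarrow> real"
  assumes cont: "continuous_on {a..b} \<phi>" and wd: "weak_deriv_on a b \<phi> g"
    and cd: "a \<le> c" "d \<le> b" and \<epsilon>: "0 < \<epsilon>" "3 * \<epsilon> \<le> d - c"
  shows "\<beta> * integral {a..b} (\<lambda>x. \<phi> x * plateau c d \<epsilon> x)
      + integral {a..b} (\<lambda>x. \<phi> x * (\<alpha> + \<beta> * x) * ramp_kernel (c + \<epsilon>) \<epsilon> x)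
      - integral {a..b} (\<lambda>x. \<phi> x * (\<alpha> + \<beta> * x) * ramp_kernel (d - 2 * \<epsilon>) \<epsilon> x)
    = - integral {a..b} (\<lambda>x. ((\<alpha> + \<beta> * x) * g x) * plateau c d \<epsilon> x)"
proof -
  define \<psi> where "\<psi> x = (\<alpha> + \<beta> * x) * plateau c d \<epsilon> x" for x
  define K1 where "K1 = ramp_kernel (c + \<epsilon>) \<epsilon>"
  define K2 where "K2 = ramp_kernel (d - 2 * \<epsilon>) \<epsilon>"
  have "DERIV (\<lambda>x. \<alpha> + \<beta> * x) x :> \<beta>" for x
    by (auto intro!: derivative_eq_intros)
  from DERIV_mult[OF this plateau_DERIV[OF \<epsilon>(1)]]
  have d\<psi>: "deriv \<psi> x = \<beta> * plateau c d \<epsilon> x + (K1 x - K2 x) * (\<alpha> + \<beta> * x)" for x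
    unfolding \<psi>_def[abs_def] K1_def K2_def by (rule DERIV_imp_deriv)
  have i: "(\<lambda>x. \<phi> x * plateau c d \<epsilon> x) integrable_on {a..b}"
    "(\<lambda>x. \<phi> x * (\<alpha> + \<beta> * x) * K1 x) integrable_on {a..b}"
    "(\<lambda>x. \<phi> x * (\<alpha> + \<beta> * x) * K2 x) integrable_on {a..b}"
    using \<epsilon>(1) unfolding K1_def K2_def plateau_def[abs_def]
    by (intro integrable_continuous_interval continuous_intros cont continuous_on_ramp
        continuous_on_ramp_kernel; simp)+
  have "integral {a..b} (\<lambda>x. \<phi> x * deriv \<psi> x)
      = integral {a..b} (\<lambda>x. \<beta> * (\<phi> x * plateau c d \<epsilon> x)
          + \<phi> x * (\<alpha> + \<beta> * x) * K1 x - \<phi> x * (\<alpha> + \<beta> * x) * K2 x)"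
    unfolding d\<psi> by (simp add: algebra_simps)
  also have "\<dots> = \<beta> * integral {a..b} (\<lambda>x. \<phi> x * plateau c d \<epsilon> x)
      + integral {a..b} (\<lambda>x. \<phi> x * (\<alpha> + \<beta> * x) * K1 x)
      - integral {a..b} (\<lambda>x. \<phi> x * (\<alpha> + \<beta> * x) * K2 x)"
    using integral_diff[OF integrable_add[OF integrable_on_mult_right[OF i(1)] i(2)] i(3)]
      integral_add[OF integrable_on_mult_right[OF i(1)] i(2)]
    by simp
  moreover have "test_fun a b \<psi>"
    unfolding \<psi>_def by (rule test_fun_affine_plateau[OF cd \<epsilon>])
  moreover have "(\<lambda>x. g x * \<psi> x) = (\<lambda>x. ((\<alpha> + \<beta> * x) * g x) * plateau c d \<epsilon> x)"
    by (simp add: \<psi>_def fun_eq_iff)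
  ultimately show ?thesis
    using wd by (simp add: weak_deriv_on_def K1_def K2_def)
qed

lemma weak_deriv_integral_affine:
  fixes \<phi> g :: "real \<Rightarrow> real"
  assumes cont: "continuous_on {a..b} \<phi>" and wd: "weak_deriv_on a b \<phi> g"
    and cd: "a \<le> c" "c < d" "d \<le> b"
  shows "integral {c..d} (\<lambda>x. (\<alpha> + \<beta> * x) * g x)
         = (\<alpha> + \<beta> * d) * \<phi> d - (\<alpha> + \<beta> * c) * \<phi> c - \<beta> * integral {c..d} \<phi>"
proof -
  define \<epsilon> where "\<epsilon> k = (d - c) / 3 * inverse (real (Suc k))" for k
  have \<epsilon>: "\<epsilon> \<longlonglongrightarrow> 0" "\<And>k. 0 < \<epsilon> k" "\<And>k. 3 * \<epsilon> k \<le> d - c"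
  proof -
    show "\<epsilon> \<longlonglongrightarrow> 0"
      unfolding \<epsilon>_def[abs_def] by (rule tendsto_mult_right_zero[OF LIMSEQ_inverse_real_of_nat])
    show "0 < \<epsilon> k" for k
      using cd by (simp add: \<epsilon>_def)
    have "(d - c) * inverse (real (Suc k)) \<le> d - c" for k
      using cd by (intro mult_left_le) (auto simp: inverse_le_1_iff)
    then show "3 * \<epsilon> k \<le> d - c" for k
      by (simp add: \<epsilon>_def)
  qed
  have w: "continuous_on {a..b} (\<lambda>x. \<phi> x * (\<alpha> + \<beta> * x))"
    by (intro continuous_intros cont)
  have lim_c: "(\<lambda>k. integral {a..b} (\<lambda>x. \<phi> x * (\<alpha> + \<beta> * x) * ramp_kernel (c + \<epsilon> k) (\<epsilon> k) x))
      \<longlonglongrightarrow> \<phi> c * (\<alpha> + \<beta> * c)"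
  proof (rule integral_ramp_kernel_tendsto[OF w _ \<epsilon>(1,2)])
    fix k
    show "a \<le> c + \<epsilon> k" "c + \<epsilon> k + \<epsilon> k \<le> b" "\<bar>c + \<epsilon> k - c\<bar> \<le> 2 * \<epsilon> k"
      using cd \<epsilon>(2,3)[of k] by auto
  qed (use cd in auto)
  have lim_d: "(\<lambda>k. integral {a..b} (\<lambda>x. \<phi> x * (\<alpha> + \<beta> * x) * ramp_kernel (d - 2 * \<epsilon> k) (\<epsilon> k) x))
      \<longlonglongrightarrow> \<phi> d * (\<alpha> + \<beta> * d)"
  proof (rule integral_ramp_kernel_tendsto[OF w _ \<epsilon>(1,2)])
    fix k
    show "a \<le> d - 2 * \<epsilon> k" "d - 2 * \<epsilon> k + \<epsilon> k \<le> b" "\<bar>d - 2 * \<epsilon> k - d\<bar> \<le> 2 * \<epsilon> k"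
      using cd \<epsilon>(2,3)[of k] by auto
  qed (use cd in auto)
  have "\<phi> absolutely_integrable_on {a..b}"
    using wd by (simp add: weak_deriv_on_def)
  from tendsto_diff[OF tendsto_add[OF tendsto_mult_left[OF plateau_integral_tendsto[OF this cd \<epsilon>]] lim_c] lim_d]
  have "(\<lambda>k. \<beta> * integral {a..b} (\<lambda>x. \<phi> x * plateau c d (\<epsilon> k) x)
      + integral {a..b} (\<lambda>x. \<phi> x * (\<alpha> + \<beta> * x) * ramp_kernel (c + \<epsilon> k) (\<epsilon> k) x)
      - integral {a..b} (\<lambda>x. \<phi> x * (\<alpha> + \<beta> * x) * ramp_kernel (d - 2 * \<epsilon> k) (\<epsilon> k) x))
      \<longlonglongrightarrow> \<beta> * integral {c..d} \<phi> + \<phi> c * (\<alpha> + \<beta> * c) - \<phi> d * (\<alpha> + \<beta> * d)" .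
  moreover have "(\<lambda>k. - integral {a..b} (\<lambda>x. ((\<alpha> + \<beta> * x) * g x) * plateau c d (\<epsilon> k) x))
      \<longlonglongrightarrow> - integral {c..d} (\<lambda>x. (\<alpha> + \<beta> * x) * g x)"
    using wd unfolding weak_deriv_on_def
    by (intro tendsto_minus plateau_integral_tendsto[OF _ cd \<epsilon>] absolutely_integrable_continuous_mult)
      (auto intro: continuous_intros)
  ultimately have "\<beta> * integral {c..d} \<phi> + \<phi> c * (\<alpha> + \<beta> * c) - \<phi> d * (\<alpha> + \<beta> * d)
      = - integral {c..d} (\<lambda>x. (\<alpha> + \<beta> * x) * g x)"
    unfolding weak_deriv_plateau_identity[OF cont wd cd(1,3) \<epsilon>(2,3)] by (rule LIMSEQ_unique)
  then show ?thesis by (simp add: algebra_simps)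
qed

lemma has_real_derivative_within_iff_approx:
  "(f has_real_derivative D) (at t within S) \<longleftrightarrow>
    (\<forall>\<delta>>0. \<forall>\<^sub>F s in at t within S. \<bar>f s - f t - D * (s - t)\<bar> \<le> \<delta> * \<bar>s - t\<bar>)"
proof -
  have "\<bar>(f s - f t) / (s - t) - D\<bar> = \<bar>f s - f t - D * (s - t)\<bar> / \<bar>s - t\<bar>" if "s \<noteq> t" for s
    using that by (simp add: field_simps flip: abs_divide)
  then have quot: "\<bar>(f s - f t) / (s - t) - D\<bar> < \<delta> \<longleftrightarrow> \<bar>f s - f t - D * (s - t)\<bar> < \<delta> * \<bar>s - t\<bar>"
    if "s \<noteq> t" for s \<delta>
    using that by (simp add: divide_less_eq)
  have "\<forall>\<^sub>F s in at t within S.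
      (\<bar>(f s - f t) / (s - t) - D\<bar> < \<delta>) = (\<bar>f s - f t - D * (s - t)\<bar> < \<delta> * \<bar>s - t\<bar>)" (is "?E \<delta>") for \<delta>
    by (rule eventually_mono[OF eventually_neq_at_within]) (rule quot)
  then have "(f has_real_derivative D) (at t within S) \<longleftrightarrow>
      (\<forall>\<delta>>0. \<forall>\<^sub>F s in at t within S. \<bar>f s - f t - D * (s - t)\<bar> < \<delta> * \<bar>s - t\<bar>)"
    unfolding has_field_derivative_iff tendsto_iff dist_real_def
    by (simp only: eventually_subst[OF \<open>?E _\<close>])
  also have "\<dots> \<longleftrightarrow> (\<forall>\<delta>>0. \<forall>\<^sub>F s in at t within S. \<bar>f s - f t - D * (s - t)\<bar> \<le> \<delta> * \<bar>s - t\<bar>)"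
  proof (intro iffI allI impI)
    fix \<delta> :: real assume "\<delta> > 0" and "\<forall>\<delta>>0. \<forall>\<^sub>F s in at t within S. \<bar>f s - f t - D * (s - t)\<bar> \<le> \<delta> * \<bar>s - t\<bar>"
    then have "\<forall>\<^sub>F s in at t within S. \<bar>f s - f t - D * (s - t)\<bar> \<le> \<delta> / 2 * \<bar>s - t\<bar>"
      by (meson half_gt_zero)
    with eventually_neq_at_within[of t t S]
    show "\<forall>\<^sub>F s in at t within S. \<bar>f s - f t - D * (s - t)\<bar> < \<delta> * \<bar>s - t\<bar>"
    proof eventually_elim
      case (elim s)
      then have "0 < \<delta> * \<bar>s - t\<bar>" using \<open>\<delta> > 0\<close> by simp
      then show ?case using elim by linarith
    qed
  qed (metis (mono_tags, lifting) eventually_mono less_imp_le)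
  finally show ?thesis .
qed

lemma eventually_close_to_tangent:
  assumes "(f has_real_derivative D) (at t within S)" "f t = 0" "D \<noteq> 0"
  shows "\<forall>\<^sub>F s in at t within S. \<bar>f s - D * (s - t)\<bar> \<le> \<bar>D * (s - t)\<bar> / 2"
proof -
  have "\<bar>D\<bar> / 2 > 0" using assms(3) by simp
  with assms(1) have "\<forall>\<^sub>F s in at t within S. \<bar>f s - f t - D * (s - t)\<bar> \<le> \<bar>D\<bar> / 2 * \<bar>s - t\<bar>"
    unfolding has_real_derivative_within_iff_approx by blast
  then show ?thesis using assms(2) by (simp add: abs_mult)
qed

lemma mult_pos_if_close:
  fixes u w :: real
  assumes "\<bar>u - w\<bar> \<le> \<bar>w\<bar> / 2" "w \<noteq> 0"
  shows "0 < u * w"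
proof (cases "0 < w")
  case True
  with assms(1) abs_ge_minus_self[of "u - w"] have "0 < u" by (simp add: abs_of_pos)
  with True show ?thesis by simp
next
  case False
  with assms have "u < 0" "w < 0" by (auto simp: abs_le_iff)
  then show ?thesis by (simp add: mult_neg_neg)
qed

lemma mult_pos_at_root_of_strict_mono:
  fixes F :: "real \<Rightarrow> real"
  assumes "\<And>z1 z2. z1 < z2 \<Longrightarrow> F z1 < F z2" "F x = 0" "0 < F z * w"
  shows "0 < (z - x) * w"
proof -
  have "0 < F z \<longleftrightarrow> x < z" "F z < 0 \<longleftrightarrow> z < x"
    using assms(1)[of z x] assms(1)[of x z] assms(2) by (metis less_asym not_less_iff_gr_or_eq)+
  then show ?thesis using assms(3) by (auto simp: zero_less_mult_iff)
qed

lemma has_real_derivative_of_monotone_implicit: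
  fixes F :: "real \<Rightarrow> real \<Rightarrow> real" and x :: "real \<Rightarrow> real"
  assumes mono: "\<And>s z1 z2. s \<in> I \<Longrightarrow> z1 < z2 \<Longrightarrow> F z1 s < F z2 s"
    and root: "\<And>s. s \<in> I \<Longrightarrow> F (x s) s = 0"
    and sign: "\<And>e. e \<noteq> 0 \<Longrightarrow> \<forall>\<^sub>F s in at t within I. 0 < F (x t + (L + e) * (s - t)) s * (e * (s - t))"
  shows "(x has_real_derivative L) (at t within I)"
  unfolding has_real_derivative_within_iff_approx
proof (intro allI impI)
  fix \<delta> :: real assume "\<delta> > 0"
  have above: "0 < (z - x s) * w" if "s \<in> I" "0 < F z s * w" for s z w
    using mult_pos_at_root_of_strict_mono[of "\<lambda>z. F z s"] mono root that by blast
  have in_I: "\<forall>\<^sub>F s in at t within I. s \<in> I"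
    by (simp add: eventually_at_filter)
  have "\<delta> \<noteq> 0" "- \<delta> \<noteq> 0" using \<open>\<delta> > 0\<close> by auto
  from eventually_conj[OF sign[OF this(1)] eventually_conj[OF sign[OF this(2)] in_I]]
  show "\<forall>\<^sub>F s in at t within I. \<bar>x s - x t - L * (s - t)\<bar> \<le> \<delta> * \<bar>s - t\<bar>"
  proof eventually_elim
    case (elim s)
    then have "s \<in> I" by simp
    define D where "D = x s - x t - L * (s - t)"
    define w where "w = \<delta> * (s - t)"
    have "0 < (x t + (L + \<delta>) * (s - t) - x s) * w"
      by (rule above[OF \<open>s \<in> I\<close>]) (use elim in \<open>simp add: w_def\<close>)
    moreover have "x t + (L + \<delta>) * (s - t) - x s = w - D"
      by (simp add: D_def w_def algebra_simps)
    ultimately have "0 < (w - D) * w" by simp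
    have "0 < (x t + (L + - \<delta>) * (s - t) - x s) * (- w)"
      by (rule above[OF \<open>s \<in> I\<close>]) (use elim in \<open>simp add: w_def\<close>)
    moreover have "(x t + (L + - \<delta>) * (s - t) - x s) * (- w) = (w + D) * w"
      by (simp add: D_def w_def algebra_simps)
    ultimately have "0 < (w + D) * w" by simp
    with \<open>0 < (w - D) * w\<close>
    have "\<bar>D\<bar> \<le> \<bar>w\<bar>"
      by (cases "0 < w") (auto simp: zero_less_mult_iff)
    then show ?case using \<open>\<delta> > 0\<close> by (simp add: D_def w_def abs_mult)
  qed
qed

definition root_sum :: "nat \<Rightarrow> nat \<Rightarrow> (nat \<Rightarrow> real \<Rightarrow> real) \<Rightarrow> (nat \<Rightarrow> real \<Rightarrow> real) \<Rightarrow> real \<Rightarrow> real \<Rightarrow> real"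
  where "root_sum N n h T z s = (\<Sum>i\<le>n. h i s * root N (z + T i s))"

lemma root_sum_strict_mono:
  assumes "0 < N" "\<And>i. i \<le> n \<Longrightarrow> 0 < h i s" "z1 < z2"
  shows "root_sum N n h T z1 s < root_sum N n h T z2 s"
  unfolding root_sum_def
  by (rule sum_strict_mono) (use assms in \<open>auto intro!: mult_strict_left_mono real_root_less_mono\<close>)

lemma DERIV_odd_root:
  assumes "odd N" "y \<noteq> 0 \<or> N = 1"
  shows "DERIV (root N) y :> inverse (real N * root N y ^ (N - 1))"
proof (cases "N = 1")
  case True
  have "root N = (\<lambda>y. y)" using True by (simp add: fun_eq_iff)
  then show ?thesis using True by simp
next
  case False
  then show ?thesis
    using assms by (intro DERIV_real_root_generic) (auto simp: odd_pos)
qed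

lemma odd_root_derivative_pos:
  assumes "odd N" "y \<noteq> 0 \<or> N = 1"
  shows "0 < inverse (real N * root N y ^ (N - 1))"
proof -
  have "0 < root N y ^ (N - 1)"
    using assms by (cases "N = 1") (auto simp: odd_pos zero_less_power_eq)
  then show ?thesis using assms(1) by (simp add: odd_pos)
qed

lemma root_sum_line_has_derivative:
  fixes h T :: "nat \<Rightarrow> real \<Rightarrow> real"
  assumes hd: "\<And>i. i \<le> n \<Longrightarrow> (h i has_real_derivative h' i) (at t within I)"
    and Td: "\<And>i. i \<le> n \<Longrightarrow> (T i has_real_derivative T' i) (at t within I)"
    and dr: "\<And>i. i \<le> n \<Longrightarrow> DERIV (root N) (z + T i t) :> dr i"
  shows "((\<lambda>s. root_sum N n h T (z + L * (s - t)) s) has_real_derivative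
      (\<Sum>i\<le>n. h' i * root N (z + T i t) + dr i * (L + T' i) * h i t)) (at t within I)"
  unfolding root_sum_def
proof (rule DERIV_sum)
  fix i assume "i \<in> {..n}"
  then have i: "i \<le> n" by simp
  have "((\<lambda>s. z + L * (s - t) + T i s) has_real_derivative L + T' i) (at t within I)"
    using Td[OF i] by (auto intro!: derivative_eq_intros)
  moreover have "DERIV (root N) (z + L * (t - t) + T i t) :> dr i"
    using dr[OF i] by simp
  ultimately show "((\<lambda>s. h i s * root N (z + L * (s - t) + T i s)) has_real_derivative
      h' i * root N (z + T i t) + dr i * (L + T' i) * h i t) (at t within I)"
    using DERIV_mult[OF hd[OF i] DERIV_chain2] by fastforce
qed

lemma root_sum_sign_nondegenerate:
  fixes h T :: "nat \<Rightarrow> real \<Rightarrow> real" and x :: "real \<Rightarrow> real"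
  assumes hd: "\<And>i. i \<le> n \<Longrightarrow> (h i has_real_derivative h' i) (at t within I)"
    and Td: "\<And>i. i \<le> n \<Longrightarrow> (T i has_real_derivative T' i) (at t within I)"
    and root: "root_sum N n h T (x t) t = 0"
    and hpos: "\<And>i. i \<le> n \<Longrightarrow> 0 < h i t"
    and dr: "\<And>i. i \<le> n \<Longrightarrow> DERIV (root N) (x t + T i t) :> dr i" "\<And>i. i \<le> n \<Longrightarrow> 0 < dr i"
  shows "\<exists>L. \<forall>e. e \<noteq> 0 \<longrightarrow>
    (\<forall>\<^sub>F s in at t within I. 0 < root_sum N n h T (x t + (L + e) * (s - t)) s * (e * (s - t)))"
proof -
  define S where "S = (\<Sum>i\<le>n. h i t * dr i)"
  define M where "M = (\<Sum>i\<le>n. h' i * root N (x t + T i t) + dr i * T' i * h i t)"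
  have "0 < S"
    unfolding S_def using hpos dr(2) by (intro sum_pos) auto
  show ?thesis
  proof (intro exI[of _ "- M / S"] allI impI)
    fix e :: real assume "e \<noteq> 0"
    define G where "G s = root_sum N n h T (x t + (- M / S + e) * (s - t)) s" for s
    have "(G has_real_derivative (\<Sum>i\<le>n. h' i * root N (x t + T i t) + dr i * (- M / S + e + T' i) * h i t))
        (at t within I)"
      unfolding G_def[abs_def] by (rule root_sum_line_has_derivative[OF hd Td dr(1)])
    also have "(\<Sum>i\<le>n. h' i * root N (x t + T i t) + dr i * (- M / S + e + T' i) * h i t)
        = (\<Sum>i\<le>n. (h' i * root N (x t + T i t) + dr i * T' i * h i t) + (- M / S + e) * (h i t * dr i))"
      by (simp add: algebra_simps)
    also have "\<dots> = M + (- M / S + e) * S"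
      by (simp add: M_def S_def sum.distrib sum_distrib_left)
    also have "\<dots> = e * S"
      using \<open>0 < S\<close> by (simp add: field_simps)
    finally have "\<forall>\<^sub>F s in at t within I. \<bar>G s - e * S * (s - t)\<bar> \<le> \<bar>e * S * (s - t)\<bar> / 2"
      by (rule eventually_close_to_tangent) (use root \<open>e \<noteq> 0\<close> \<open>0 < S\<close> in \<open>simp_all add: G_def\<close>)
    then show "\<forall>\<^sub>F s in at t within I. 0 < root_sum N n h T (x t + (- M / S + e) * (s - t)) s * (e * (s - t))"
    proof (rule eventually_mono[OF eventually_conj[OF _ eventually_neq_at_within]])
      fix s assume "\<bar>G s - e * S * (s - t)\<bar> \<le> \<bar>e * S * (s - t)\<bar> / 2 \<and> s \<noteq> t"
      then have "0 < G s * (e * S * (s - t))"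
        using \<open>e \<noteq> 0\<close> \<open>0 < S\<close> by (intro mult_pos_if_close) auto
      then have "0 < S * (G s * (e * (s - t)))"
        by (simp add: ac_simps)
      then have "0 < G s * (e * (s - t))"
        using zero_less_mult_pos \<open>0 < S\<close> by blast
      then show "0 < root_sum N n h T (x t + (- M / S + e) * (s - t)) s * (e * (s - t))"
        by (simp add: G_def)
    qed
  qed
qed

lemma eventually_abs_le_linear:
  assumes "(f has_real_derivative D) (at t within S)" "f t = 0"
  shows "\<forall>\<^sub>F s in at t within S. \<bar>f s\<bar> \<le> (\<bar>D\<bar> + 1) * \<bar>s - t\<bar>"
proof -
  have "\<forall>\<^sub>F s in at t within S. \<bar>f s - f t - D * (s - t)\<bar> \<le> 1 * \<bar>s - t\<bar>"
    using assms(1) zero_less_one unfolding has_real_derivative_within_iff_approx by blast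
  then show ?thesis
  proof eventually_elim
    case (elim s)
    then have "\<bar>f s - D * (s - t)\<bar> \<le> \<bar>s - t\<bar>" using assms(2) by simp
    then show ?case
      using abs_triangle_ineq2[of "f s" "D * (s - t)"] abs_mult[of D "s - t"] by (simp add: algebra_simps)

  qed
qed

lemma eventually_linear_less_root:
  assumes "2 \<le> N" "0 < H"
  shows "\<forall>\<^sub>F v in at_right 0. C * v < H * root N v"
proof -
  have "(root N \<longlongrightarrow> 0) (at_right 0)"
    using continuous_at_imp_continuous_at_within[OF isCont_real_root[of 0 N], of "{0<..}"]
    by (simp add: continuous_within)
  then have "((\<lambda>v. root N v ^ (N - 1)) \<longlongrightarrow> 0) (at_right 0)"
    using tendsto_power[of "root N" 0 "at_right 0" "N - 1"] assms(1) by (simp add: power_0_left)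
  moreover have "0 < H / (\<bar>C\<bar> + 1)" using assms(2) by simp
  ultimately have "\<forall>\<^sub>F v in at_right 0. root N v ^ (N - 1) < H / (\<bar>C\<bar> + 1)"
    by (rule order_tendstoD)
  with eventually_at_right_less[of 0] show ?thesis
  proof eventually_elim
    case (elim v)
    have r: "0 < root N v" using elim assms(1) by simp
    have "v = root N v ^ (N - 1) * root N v"
      using elim assms(1) real_root_pow_pos[of N v] by (simp flip: power_Suc2)
    moreover have "C * v \<le> \<bar>C\<bar> * v"
      using elim by (intro mult_right_mono) auto
    ultimately have "C * v \<le> \<bar>C\<bar> * root N v ^ (N - 1) * root N v"
      by (simp add: mult.assoc)
    also have "\<dots> \<le> (\<bar>C\<bar> + 1) * root N v ^ (N - 1) * root N v"
      using r by (intro mult_right_mono) simp_all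
    also have "\<dots> < H * root N v"
      using elim r by (intro mult_strict_right_mono) (simp_all add: field_simps)
    finally show ?case .
  qed
qed

lemma root_sum_dominated_by_vanishing_terms:
  fixes y h :: "nat \<Rightarrow> real"
  assumes K: "finite K" "k \<in> K" and "0 < N" "w \<noteq> 0"
    and close: "\<And>i. i \<in> K \<Longrightarrow> \<bar>y i - w\<bar> \<le> \<bar>w\<bar> / 2"
    and hpos: "\<And>i. i \<in> K \<Longrightarrow> 0 < h i" and "H \<le> h k"
    and R: "\<bar>R\<bar> < H * root N (\<bar>w\<bar> / 2)"
  shows "0 < (R + (\<Sum>i\<in>K. h i * root N (y i))) * w"
proof -
  have sign: "0 < root N (y i) * w" if "i \<in> K" for i
    using mult_pos_if_close[OF close[OF that] \<open>w \<noteq> 0\<close>] \<open>0 < N\<close> by (auto simp: zero_less_mult_iff)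
  have "0 < root N (\<bar>w\<bar> / 2)" using \<open>0 < N\<close> \<open>w \<noteq> 0\<close> by simp
  then have "0 \<le> H" using R by (smt (verit) zero_less_mult_iff)
  have "\<bar>w\<bar> / 2 \<le> \<bar>y k\<bar>"
    using close[OF K(2)] abs_triangle_ineq2[of w "y k"] by (simp add: abs_minus_commute)
  then have "root N (\<bar>w\<bar> / 2) \<le> \<bar>root N (y k)\<bar>"
    using \<open>0 < N\<close> by (simp add: real_root_abs[symmetric])
  then have "H * root N (\<bar>w\<bar> / 2) * \<bar>w\<bar> \<le> h k * \<bar>root N (y k)\<bar> * \<bar>w\<bar>"
    using \<open>0 \<le> H\<close> \<open>H \<le> h k\<close> \<open>0 < root N (\<bar>w\<bar> / 2)\<close> by (intro mult_right_mono mult_mono) auto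
  also have "\<dots> = h k * root N (y k) * w"
    using sign[OF K(2)] by (simp add: mult.assoc abs_mult[symmetric])
  also have "\<dots> \<le> (\<Sum>i\<in>K. h i * root N (y i) * w)"
    using K sign hpos by (intro member_le_sum) (auto simp: mult.assoc less_imp_le)
  finally have "H * root N (\<bar>w\<bar> / 2) * \<bar>w\<bar> \<le> (\<Sum>i\<in>K. h i * root N (y i)) * w"
    by (simp add: sum_distrib_right)
  moreover have "\<bar>R\<bar> * \<bar>w\<bar> < H * root N (\<bar>w\<bar> / 2) * \<bar>w\<bar>"
    using R \<open>w \<noteq> 0\<close> by (intro mult_strict_right_mono) auto
  then have "- (R * w) < H * root N (\<bar>w\<bar> / 2) * \<bar>w\<bar>"
    using abs_ge_minus_self[of "R * w"] by (simp add: abs_mult)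
  ultimately show ?thesis by (simp add: distrib_right)
qed

lemma eventually_linear_less_root_within:
  assumes "2 \<le> N" "0 < H" "e \<noteq> 0"
  shows "\<forall>\<^sub>F s in at t within I. M * \<bar>s - t\<bar> < H * root N (\<bar>e * (s - t)\<bar> / 2)"
proof -
  have "filterlim (\<lambda>s. \<bar>e * (s - t)\<bar> / 2) (at_right 0) (at t within I)"
    using assms(3)
    by (intro tendsto_imp_filterlim_at_right eventually_mono[OF eventually_neq_at_within])
      (auto intro!: tendsto_eq_intros)
  from filterlim_iff[THEN iffD1, OF this, rule_format,
      OF eventually_linear_less_root[OF assms(1,2), of "2 * M / \<bar>e\<bar>"]]
  show ?thesis
    using assms(3) by (simp add: abs_mult)
qed

lemma differentiable_root_terms:
  fixes h y :: "nat \<Rightarrow> real \<Rightarrow> real"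
  assumes "odd N" "finite A"
    and "\<And>i. i \<in> A \<Longrightarrow> (h i has_real_derivative h' i) (at t within I)"
    and "\<And>i. i \<in> A \<Longrightarrow> (y i has_real_derivative y' i) (at t within I)"
    and "\<And>i. i \<in> A \<Longrightarrow> y i t \<noteq> 0"
  shows "(\<lambda>s. \<Sum>i\<in>A. h i s * root N (y i s)) differentiable (at t within I)"
proof (intro differentiable_sum[OF assms(2)] ballI)
  fix i assume "i \<in> A"
  then show "(\<lambda>s. h i s * root N (y i s)) differentiable (at t within I)"
    using DERIV_mult[OF assms(3) DERIV_chain2[OF DERIV_odd_root[OF assms(1)] assms(4)]] assms(5)
    by (auto simp: real_differentiable_def)
qed

lemma root_sum_sign_degenerate:
  fixes h T :: "nat \<Rightarrow> real \<Rightarrow> real" and x :: "real \<Rightarrow> real"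
  assumes t: "t \<in> I"
    and hd: "\<And>i. i \<le> n \<Longrightarrow> (h i has_real_derivative h' i) (at t within I)"
    and Td: "\<And>i. i \<le> n \<Longrightarrow> (T i has_real_derivative T' i) (at t within I)"
    and root: "root_sum N n h T (x t) t = 0"
    and hpos: "\<And>s i. s \<in> I \<Longrightarrow> i \<le> n \<Longrightarrow> 0 < h i s"
    and N: "2 \<le> N" "odd N"
    and k: "k \<le> n" "x t + T k t = 0"
    and degen: "\<And>i. i \<le> n \<Longrightarrow> x t + T i t = 0 \<Longrightarrow> T' i = \<gamma>"
    and "e \<noteq> 0"
  shows "\<forall>\<^sub>F s in at t within I. 0 < root_sum N n h T (x t + (- \<gamma> + e) * (s - t)) s * (e * (s - t))"
proof -
  define y where "y i s = x t + (- \<gamma> + e) * (s - t) + T i s" for i s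
  define K where "K = {i. i \<le> n \<and> x t + T i t = 0}"
  define R where "R s = (\<Sum>i\<in>{..n} - K. h i s * root N (y i s))" for s
  have K: "finite K" "K \<subseteq> {..n}" "k \<in> K"
    using k by (auto simp: K_def)
  have y_deriv: "(y i has_real_derivative - \<gamma> + e + T' i) (at t within I)" if "i \<le> n" for i
    unfolding y_def[abs_def] using Td[OF that] by (auto intro!: derivative_eq_intros)
  have split: "root_sum N n h T (x t + (- \<gamma> + e) * (s - t)) s = R s + (\<Sum>i\<in>K. h i s * root N (y i s))" for s
    unfolding root_sum_def R_def y_def using K by (simp add: sum.subset_diff[of K "{..n}"] add_ac)
  have near: "\<forall>\<^sub>F s in at t within I. \<forall>i\<in>K. \<bar>y i s - e * (s - t)\<bar> \<le> \<bar>e * (s - t)\<bar> / 2"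
  proof (rule eventually_ball_finite[OF K(1)], intro ballI)
    fix i assume "i \<in> K"
    then have "(y i has_real_derivative e) (at t within I)" "y i t = 0"
      using y_deriv[of i] degen[of i] by (auto simp: K_def y_def)
    then show "\<forall>\<^sub>F s in at t within I. \<bar>y i s - e * (s - t)\<bar> \<le> \<bar>e * (s - t)\<bar> / 2"
      using eventually_close_to_tangent \<open>e \<noteq> 0\<close> by blast
  qed
  have "R differentiable (at t within I)"
    unfolding R_def[abs_def]
  proof (rule differentiable_root_terms[OF N(2)])
    fix i assume "i \<in> {..n} - K"
    then show "(h i has_real_derivative h' i) (at t within I)"
      "(y i has_real_derivative - \<gamma> + e + T' i) (at t within I)" "y i t \<noteq> 0"
      using hd y_deriv by (auto simp: K_def y_def)
  qed simp
  then obtain R' where R': "(R has_real_derivative R') (at t within I)"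
    by (auto simp: real_differentiable_def)
  have "R t = 0"
    using split[of t] root by (simp add: y_def K_def root_sum_def)
  with R' have R_small: "\<forall>\<^sub>F s in at t within I. \<bar>R s\<bar> \<le> (\<bar>R'\<bar> + 1) * \<bar>s - t\<bar>"
    by (rule eventually_abs_le_linear)
  define H where "H = h k t / 2"
  have "0 < H" using hpos[OF t k(1)] by (simp add: H_def)
  have "H < h k t" using \<open>0 < H\<close> by (simp add: H_def)
  with DERIV_continuous[OF hd[OF k(1)]] have h_k: "\<forall>\<^sub>F s in at t within I. H < h k s"
    unfolding continuous_within by (rule order_tendstoD(1))
  have root_large: "\<forall>\<^sub>F s in at t within I. (\<bar>R'\<bar> + 1) * \<bar>s - t\<bar> < H * root N (\<bar>e * (s - t)\<bar> / 2)"
    by (rule eventually_linear_less_root_within[OF N(1) \<open>0 < H\<close> \<open>e \<noteq> 0\<close>])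
  have "\<forall>\<^sub>F s in at t within I. s \<in> I \<and> s \<noteq> t"
    by (simp add: eventually_at_filter)
  with near R_small h_k root_large show ?thesis
  proof eventually_elim
    case (elim s)
    then have "0 < (R s + (\<Sum>i\<in>K. h i s * root N (y i s))) * (e * (s - t))"
      using K hpos[of s] \<open>e \<noteq> 0\<close> N(1)
      by (intro root_sum_dominated_by_vanishing_terms[where H = H]) auto
    then show ?case by (simp only: split)
  qed
qed

lemma root_sum_implicit_differentiable:
  fixes h T :: "nat \<Rightarrow> real \<Rightarrow> real" and x :: "real \<Rightarrow> real"
  assumes t: "t \<in> I"
    and hd: "\<And>i. i \<le> n \<Longrightarrow> (h i has_real_derivative h' i) (at t within I)"
    and Td: "\<And>i. i \<le> n \<Longrightarrow> (T i has_real_derivative T' i) (at t within I)"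
    and root: "\<And>s. s \<in> I \<Longrightarrow> root_sum N n h T (x s) s = 0"
    and hpos: "\<And>s i. s \<in> I \<Longrightarrow> i \<le> n \<Longrightarrow> 0 < h i s"
    and N: "odd N"
    and degen: "\<And>i. i \<le> n \<Longrightarrow> x t + T i t = 0 \<Longrightarrow> T' i = \<gamma>"
  shows "x differentiable (at t within I)"
proof -
  have mono: "root_sum N n h T z1 s < root_sum N n h T z2 s" if "s \<in> I" "z1 < z2" for s z1 z2
    using that N hpos by (intro root_sum_strict_mono) (auto simp: odd_pos)
  show ?thesis
  proof (cases "N = 1 \<or> (\<forall>i\<le>n. x t + T i t \<noteq> 0)")
    case True
    have dr: "DERIV (root N) (x t + T i t) :> inverse (real N * root N (x t + T i t) ^ (N - 1))"
      if "i \<le> n" for i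
      by (rule DERIV_odd_root[OF N]) (use True that in auto)
    have dr_pos: "0 < inverse (real N * root N (x t + T i t) ^ (N - 1))" if "i \<le> n" for i
      by (rule odd_root_derivative_pos[OF N]) (use True that in auto)
    obtain L where L: "\<And>e. e \<noteq> 0 \<Longrightarrow>
        \<forall>\<^sub>F s in at t within I. 0 < root_sum N n h T (x t + (L + e) * (s - t)) s * (e * (s - t))"
      using root_sum_sign_nondegenerate[where x = x, OF hd Td root[OF t] hpos[OF t] dr dr_pos] by blast
    have "(x has_real_derivative L) (at t within I)"
      by (rule has_real_derivative_of_monotone_implicit[where F = "root_sum N n h T" and x = x, OF mono root L])
    then show ?thesis by (auto simp: real_differentiable_def)
  next
    case False
    then obtain k where k: "k \<le> n" "x t + T k t = 0" by auto
    from False N have "2 \<le> N" by (cases N) auto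
    have sign: "\<forall>\<^sub>F s in at t within I. 0 < root_sum N n h T (x t + (- \<gamma> + e) * (s - t)) s * (e * (s - t))"
      if "e \<noteq> 0" for e
      by (rule root_sum_sign_degenerate[where x = x, OF t hd Td root[OF t] hpos \<open>2 \<le> N\<close> N k degen that])
    have "(x has_real_derivative - \<gamma>) (at t within I)"
      by (rule has_real_derivative_of_monotone_implicit[where F = "root_sum N n h T" and x = x, OF mono root sign])
    then show ?thesis by (auto simp: real_differentiable_def)
  qed
qed

definition slope :: "(nat \<Rightarrow> real) \<Rightarrow> (nat \<Rightarrow> real) \<Rightarrow> nat \<Rightarrow> real" where
  "slope q w i = (w (Suc i) - w i) / (q (Suc i) - q i)"

lemma knots_mono:
  fixes q :: "nat \<Rightarrow> real"
  assumes "\<And>i. i \<le> n \<Longrightarrow> q i < q (Suc i)" "i \<le> j" "j \<le> Suc n"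
  shows "q i \<le> q j"
  by (rule lift_Suc_mono_le_ivl[of "{..n}" q]) (use assms in \<open>auto intro: less_imp_le\<close>)

lemma has_integral_knots_sum:
  fixes q :: "nat \<Rightarrow> real" and f :: "real \<Rightarrow> 'a::banach"
  assumes "\<And>i. i \<le> n \<Longrightarrow> q i < q (Suc i)"
    and "\<And>i. i \<le> n \<Longrightarrow> (f has_integral y i) {q i..q (Suc i)}"
  shows "(f has_integral (\<Sum>i\<le>n. y i)) {q 0..q (Suc n)}"
  using assms
proof (induction n)
  case (Suc n)
  have "q 0 \<le> q (Suc n)" "q (Suc n) \<le> q (Suc (Suc n))"
    using knots_mono[of "Suc n" q, OF Suc.prems(1), of 0 "Suc n"] Suc.prems(1)[of "Suc n"] by simp_all
  moreover have "(f has_integral (\<Sum>i\<le>n. y i)) {q 0..q (Suc n)}"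
    using Suc.prems by (intro Suc.IH) auto
  moreover have "(f has_integral y (Suc n)) {q (Suc n)..q (Suc (Suc n))}"
    using Suc.prems(2) by simp
  ultimately have "(f has_integral (\<Sum>i\<le>n. y i) + y (Suc n)) {q 0..q (Suc (Suc n))}"
    by (rule has_integral_combine)
  then show ?case by simp
qed simp

lemma deriv_piecewise_linear:
  assumes "\<And>x. x \<in> {q i..q (Suc i)} \<Longrightarrow> U x = w i + slope q w i * (x - q i)"
    and "x \<in> {q i<..<q (Suc i)}"
  shows "deriv U x = slope q w i"
proof (rule DERIV_imp_deriv)
  have "DERIV (\<lambda>y. w i + slope q w i * (y - q i)) x :> slope q w i"
    by (auto intro!: derivative_eq_intros)
  then show "DERIV U x :> slope q w i"
    by (rule has_field_derivative_transform_within_open[where S="{q i<..<q (Suc i)}"]) (use assms in auto)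
qed

lemma integral_piecewise_linear_deriv:
  fixes q w :: "nat \<Rightarrow> real" and U \<phi> G :: "real \<Rightarrow> real"
  assumes q: "\<And>i. i \<le> n \<Longrightarrow> q i < q (Suc i)"
    and U: "\<And>i x. i \<le> n \<Longrightarrow> x \<in> {q i..q (Suc i)} \<Longrightarrow> U x = w i + slope q w i * (x - q i)"
    and \<phi>: "continuous_on {q 0..q (Suc n)} \<phi>"
  shows "integral {q 0..q (Suc n)} (\<lambda>x. G (deriv U x) * \<phi> x)
    = (\<Sum>i\<le>n. G (slope q w i) * integral {q i..q (Suc i)} \<phi>)"
proof (rule integral_unique, rule has_integral_knots_sum[of n q, OF q])
  fix i assume i: "i \<le> n"
  have "{q i..q (Suc i)} \<subseteq> {q 0..q (Suc n)}"
    using knots_mono[of n q, OF q, of 0 i] knots_mono[of n q, OF q, of "Suc i" "Suc n"] i by auto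
  then have "continuous_on {q i..q (Suc i)} \<phi>"
    by (rule continuous_on_subset[OF \<phi>])
  then have "\<phi> integrable_on {q i..q (Suc i)}"
    by (rule integrable_continuous_interval)
  then have hi: "((\<lambda>x. G (slope q w i) * \<phi> x) has_integral G (slope q w i) * integral {q i..q (Suc i)} \<phi>)
      {q i..q (Suc i)}"
    by (intro has_integral_mult_right integrable_integral)
  show "((\<lambda>x. G (deriv U x) * \<phi> x) has_integral G (slope q w i) * integral {q i..q (Suc i)} \<phi>)
      {q i..q (Suc i)}"
  proof (rule has_integral_spike_finite[of "{q i, q (Suc i)}", OF _ _ hi])
    fix x assume "x \<in> {q i..q (Suc i)} - {q i, q (Suc i)}"
    then have "deriv U x = slope q w i"
      by (intro deriv_piecewise_linear[OF U[OF i]]) auto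
    then show "G (deriv U x) * \<phi> x = G (slope q w i) * \<phi> x" by simp
  qed simp
qed

lemma integral_piecewise_linear_weak_deriv:
  fixes q w :: "nat \<Rightarrow> real" and U \<phi> g G :: "real \<Rightarrow> real"
  assumes q: "\<And>i. i \<le> n \<Longrightarrow> q i < q (Suc i)"
    and U: "\<And>i x. i \<le> n \<Longrightarrow> x \<in> {q i..q (Suc i)} \<Longrightarrow> U x = w i + slope q w i * (x - q i)"
    and \<phi>: "continuous_on {q 0..q (Suc n)} \<phi>" "weak_deriv_on (q 0) (q (Suc n)) \<phi> g"
  shows "integral {q 0..q (Suc n)} (\<lambda>x. U x * G (deriv U x) * g x)
    = (\<Sum>i\<le>n. G (slope q w i) * (w (Suc i) * \<phi> (q (Suc i)) - w i * \<phi> (q i)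
                                   - slope q w i * integral {q i..q (Suc i)} \<phi>))"
proof (rule integral_unique, rule has_integral_knots_sum[of n q, OF q])
  fix i assume i: "i \<le> n"
  define \<alpha> where "\<alpha> = w i - slope q w i * q i"
  have sub: "q 0 \<le> q i" "q (Suc i) \<le> q (Suc n)"
    using knots_mono[of n q, OF q, of 0 i] knots_mono[of n q, OF q, of "Suc i" "Suc n"] i by auto
  have affine: "U x = \<alpha> + slope q w i * x" if "x \<in> {q i..q (Suc i)}" for x
    using U[OF i that] by (simp add: \<alpha>_def algebra_simps)
  have "slope q w i * (q (Suc i) - q i) = w (Suc i) - w i"
    using q[OF i] by (simp add: slope_def)
  then have "w (Suc i) = \<alpha> + slope q w i * q (Suc i)"
    unfolding \<alpha>_def right_diff_distrib by linarith
  then have val: "integral {q i..q (Suc i)} (\<lambda>x. (\<alpha> + slope q w i * x) * g x)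
      = w (Suc i) * \<phi> (q (Suc i)) - w i * \<phi> (q i) - slope q w i * integral {q i..q (Suc i)} \<phi>"
    using weak_deriv_integral_affine[OF \<phi> sub(1) q[OF i] sub(2)] by (simp add: \<alpha>_def)
  have "(\<lambda>x. (\<alpha> + slope q w i * x) * g x) absolutely_integrable_on {q 0..q (Suc n)}"
    using \<phi>(2) unfolding weak_deriv_on_def
    by (intro absolutely_integrable_continuous_mult continuous_intros) auto
  then have "(\<lambda>x. (\<alpha> + slope q w i * x) * g x) integrable_on {q 0..q (Suc n)}"
    by (simp add: absolutely_integrable_on_def)
  then have "(\<lambda>x. (\<alpha> + slope q w i * x) * g x) integrable_on {q i..q (Suc i)}"
    by (rule integrable_on_subinterval) (use sub in auto)
  from has_integral_mult_right[OF integrable_integral[OF this], of "G (slope q w i)"]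
  have hi: "((\<lambda>x. G (slope q w i) * ((\<alpha> + slope q w i * x) * g x)) has_integral
      G (slope q w i) * (w (Suc i) * \<phi> (q (Suc i)) - w i * \<phi> (q i) - slope q w i * integral {q i..q (Suc i)} \<phi>))
      {q i..q (Suc i)}"
    by (simp only: val)
  show "((\<lambda>x. U x * G (deriv U x) * g x) has_integral
      G (slope q w i) * (w (Suc i) * \<phi> (q (Suc i)) - w i * \<phi> (q i) - slope q w i * integral {q i..q (Suc i)} \<phi>))
      {q i..q (Suc i)}"
  proof (rule has_integral_spike_finite[of "{q i, q (Suc i)}", OF _ _ hi])
    fix x assume x: "x \<in> {q i..q (Suc i)} - {q i, q (Suc i)}"
    then have "deriv U x = slope q w i"
      by (intro deriv_piecewise_linear[OF U[OF i]]) auto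
    then show "U x * G (deriv U x) * g x = G (slope q w i) * ((\<alpha> + slope q w i * x) * g x)"
      using affine x by simp
  qed simp
qed

lemma summation_by_parts:
  fixes A B :: "nat \<Rightarrow> 'a::comm_ring"
  shows "(\<Sum>i\<le>n. A i * (B (Suc i) - B i))
       = A n * B (Suc n) - A 0 * B 0 - (\<Sum>i\<in>{1..n}. (A i - A (i - 1)) * B i)"
proof (induction n)
  case (Suc n)
  have "{1..Suc n} = insert (Suc n) {1..n}" by auto
  with Suc show ?case by (simp add: algebra_simps)
qed (simp add: algebra_simps)

lemma weak_form_sum_identity:
  fixes m v e F z P :: "nat \<Rightarrow> real"
  assumes P: "\<And>i. i \<in> {1..n} \<Longrightarrow> P i = m (i - 1) - m i"
    and e: "\<And>i. i \<le> n \<Longrightarrow> m i * v i = e i"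
    and F0: "F 0 = 0" and z: "z 0 = 0" "z (Suc n) = 0"
  shows "(1 - \<kappa>) * (\<Sum>i\<le>n. e i * (F (Suc i) - F i))
           + (\<Sum>i\<le>n. m i * (z (Suc i) - z i - v i * (F (Suc i) - F i))) + \<kappa> * e n * F (Suc n)
       = (\<Sum>i\<in>{1..n}. \<kappa> * (e i - e (i - 1)) * F i + P i * z i)"
proof -
  define E where "E = (\<Sum>i\<le>n. e i * (F (Suc i) - F i))"
  define X where "X = (\<Sum>i\<in>{1..n}. (e i - e (i - 1)) * F i)"
  define Y where "Y = (\<Sum>i\<in>{1..n}. P i * z i)"
  have "(\<Sum>i\<in>{1..n}. (m i - m (i - 1)) * z i) = (\<Sum>i\<in>{1..n}. - (P i * z i))"
    by (rule sum.cong) (simp_all add: P algebra_simps)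
  then have "(\<Sum>i\<le>n. m i * (z (Suc i) - z i)) = Y"
    using summation_by_parts[of m z n] z by (simp add: sum_negf Y_def)
  then have A: "(\<Sum>i\<le>n. m i * (z (Suc i) - z i - v i * (F (Suc i) - F i))) = Y - E"
    using e by (simp add: E_def right_diff_distrib mult.assoc[symmetric] sum_subtractf)
  have B: "E = e n * F (Suc n) - X"
    using summation_by_parts[of e F n] F0 by (simp add: E_def X_def)
  have C: "(\<Sum>i\<in>{1..n}. \<kappa> * (e i - e (i - 1)) * F i + P i * z i) = \<kappa> * X + Y"
    by (simp add: X_def Y_def sum.distrib sum_distrib_left mult.assoc)
  show ?thesis
    unfolding E_def[symmetric] A C B by (simp add: algebra_simps)
qed

locale piecewise_linear_flow =
  fixes r n :: nat and a b :: real and I :: "real set"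
    and Q P uh v :: "nat \<Rightarrow> real \<Rightarrow> real" and u :: "real \<Rightarrow> real \<Rightarrow> real"
  assumes r: "even r" "2 \<le> r"
    and Q_ends: "\<And>t. t \<in> I \<Longrightarrow> Q 0 t = a \<and> Q (Suc n) t = b"
    and Q_less: "\<And>t i. t \<in> I \<Longrightarrow> i \<le> n \<Longrightarrow> Q i t < Q (Suc i) t"
    and uh_ends: "\<And>t. t \<in> I \<Longrightarrow> uh 0 t = 0 \<and> uh (Suc n) t = 0"
    and v_def: "\<And>i t. v i t = slope (\<lambda>j. Q j t) (\<lambda>j. uh j t) i"
    and P_eq: "\<And>t i. t \<in> I \<Longrightarrow> i \<in> {1..n} \<Longrightarrow>
      P i t = \<bar>v (i - 1) t\<bar> ^ (r - 2) * v (i - 1) t - \<bar>v i t\<bar> ^ (r - 2) * v i t"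
    and Q_deriv: "\<And>t i. t \<in> I \<Longrightarrow> i \<in> {1..n} \<Longrightarrow> (Q i has_real_derivative uh i t) (at t within I)"
    and P_deriv: "\<And>t i. t \<in> I \<Longrightarrow> i \<in> {1..n} \<Longrightarrow>
      (P i has_real_derivative (real r - 1) / real r * (\<bar>v i t\<bar> ^ r - \<bar>v (i - 1) t\<bar> ^ r)) (at t within I)"
    and u_eq: "\<And>t i x. t \<in> I \<Longrightarrow> i \<le> n \<Longrightarrow> x \<in> {Q i t..Q (Suc i) t} \<Longrightarrow> u x t = uh i t + v i t * (x - Q i t)"
begin

definition flux :: "nat \<Rightarrow> real \<Rightarrow> real" where
  "flux i t = \<bar>v i t\<bar> ^ (r - 2) * v i t"

lemma P_flux: "t \<in> I \<Longrightarrow> i \<in> {1..n} \<Longrightarrow> P i t = flux (i - 1) t - flux i t"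
  by (simp add: P_eq flux_def)

lemma r_eq: "r = Suc (Suc (r - 2))"
  using r(2) by arith

lemma flux_mult_slope: "flux i t * v i t = \<bar>v i t\<bar> ^ r"
proof -
  define k where "k = r - 2"
  have k: "r = Suc (Suc k)" unfolding k_def by (rule r_eq)
  have "flux i t * v i t = \<bar>v i t\<bar> ^ k * (v i t * v i t)"
    unfolding flux_def by (simp add: k mult.assoc)
  also have "\<dots> = \<bar>v i t\<bar> ^ k * (\<bar>v i t\<bar> * \<bar>v i t\<bar>)"
    by (simp only: abs_mult_self_eq)
  also have "\<dots> = \<bar>v i t\<bar> ^ r"
    by (simp add: k mult_ac)
  finally show ?thesis .
qed

lemma root_flux: "root (r - 1) (flux i t) = v i t"
proof -
  define k where "k = r - 2"
  have k: "r = Suc (Suc k)" unfolding k_def by (rule r_eq)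
  have "flux i t = sgn (v i t) * \<bar>v i t\<bar> ^ (r - 1)"
    unfolding flux_def by (cases "v i t" "0::real" rule: linorder_cases) (simp_all add: k)
  then show ?thesis using r(2) by (simp add: root_sgn_power)
qed

lemma Q_deriv_ends:
  assumes "t \<in> I" "i \<le> Suc n"
  shows "(Q i has_real_derivative uh i t) (at t within I)"
proof -
  consider "i = 0" | "i = Suc n" | "i \<in> {1..n}" using assms(2) by force
  then show ?thesis
  proof cases
    case 1
    have "((\<lambda>s. a) has_real_derivative uh i t) (at t within I)" using uh_ends assms(1) 1 by simp
    then show ?thesis
      by (rule has_field_derivative_transform_within[where d=1]) (use assms(1) Q_ends 1 in auto)
  next
    case 2
    have "((\<lambda>s. b) has_real_derivative uh i t) (at t within I)" using uh_ends assms(1) 2 by simp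
    then show ?thesis
      by (rule has_field_derivative_transform_within[where d=1]) (use assms(1) Q_ends 2 in auto)
  qed (use Q_deriv assms in auto)
qed

definition tail :: "nat \<Rightarrow> real \<Rightarrow> real" where
  "tail i s = (\<Sum>j\<in>{Suc i..n}. P j s)"

lemma flux_eq_tail:
  assumes "s \<in> I" "i \<le> n"
  shows "flux n s + tail i s = flux i s"
proof -
  have "tail i s = - (\<Sum>j\<in>{Suc i..n}. flux j s - flux (j - 1) s)"
    unfolding tail_def sum_negf[symmetric] using P_flux[OF assms(1)] by (intro sum.cong) auto
  then show ?thesis using sum_telescope''[OF assms(2), of "\<lambda>j. flux j s"] by simp
qed

lemma tail_has_derivative:
  assumes "t \<in> I" "i \<le> n"
  shows "(tail i has_real_derivative (real r - 1) / real r * (\<bar>v n t\<bar> ^ r - \<bar>v i t\<bar> ^ r)) (at t within I)"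
proof -
  define \<kappa> where "\<kappa> = (real r - 1) / real r"
  have "(tail i has_real_derivative (\<Sum>j\<in>{Suc i..n}. \<kappa> * (\<bar>v j t\<bar> ^ r - \<bar>v (j - 1) t\<bar> ^ r)))
      (at t within I)"
    unfolding tail_def[abs_def] \<kappa>_def using assms(1) by (intro DERIV_sum P_deriv) auto
  also have "(\<Sum>j\<in>{Suc i..n}. \<kappa> * (\<bar>v j t\<bar> ^ r - \<bar>v (j - 1) t\<bar> ^ r))
      = \<kappa> * (\<Sum>j\<in>{Suc i..n}. \<bar>v j t\<bar> ^ r - \<bar>v (j - 1) t\<bar> ^ r)"
    by (rule sum_distrib_left[symmetric])
  also have "\<dots> = \<kappa> * (\<bar>v n t\<bar> ^ r - \<bar>v i t\<bar> ^ r)"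
    using sum_telescope''[OF assms(2), of "\<lambda>j. \<bar>v j t\<bar> ^ r"] by simp
  finally show ?thesis unfolding \<kappa>_def .
qed

lemma root_sum_flux_last:
  assumes "s \<in> I"
  shows "root_sum (r - 1) n (\<lambda>i s. Q (Suc i) s - Q i s) tail (flux n s) s = 0"
proof -
  have "root_sum (r - 1) n (\<lambda>i s. Q (Suc i) s - Q i s) tail (flux n s) s = (\<Sum>i\<le>n. uh (Suc i) s - uh i s)"
    unfolding root_sum_def
  proof (rule sum.cong)
    fix i assume "i \<in> {..n}"
    then have "Q i s < Q (Suc i) s" "flux n s + tail i s = flux i s"
      using Q_less[OF assms] flux_eq_tail[OF assms] by auto
    then show "(Q (Suc i) s - Q i s) * root (r - 1) (flux n s + tail i s) = uh (Suc i) s - uh i s"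
      by (simp add: root_flux[simplified] v_def slope_def)
  qed simp
  also have "\<dots> = 0"
    using uh_ends[OF assms] sum_Suc_diff[of 0 n "\<lambda>i. uh i s"] by (simp add: atLeast0AtMost)
  finally show ?thesis .
qed

lemma flux_last_differentiable:
  assumes t: "t \<in> I"
  shows "flux n differentiable (at t within I)"
proof (rule root_sum_implicit_differentiable[OF t _ tail_has_derivative[OF t] root_sum_flux_last])
  fix i assume "i \<le> n"
  then show "((\<lambda>s. Q (Suc i) s - Q i s) has_real_derivative uh (Suc i) t - uh i t) (at t within I)"
    using t by (intro DERIV_diff Q_deriv_ends) auto
  assume "flux n t + tail i t = 0"
  then have "v i t = 0"
    using root_flux[of i t] flux_eq_tail[OF t \<open>i \<le> n\<close>] by simp
  then show "(real r - 1) / real r * (\<bar>v n t\<bar> ^ r - \<bar>v i t\<bar> ^ r) = (real r - 1) / real r * \<bar>v n t\<bar> ^ r"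
    using r(2) by simp
qed (use Q_less r in auto)

definition flux_rate :: "real \<Rightarrow> real" where
  "flux_rate t = (SOME D. (flux n has_real_derivative D) (at t within I))"

lemma flux_rate: "t \<in> I \<Longrightarrow> (flux n has_real_derivative flux_rate t) (at t within I)"
  unfolding flux_rate_def
  by (rule someI_ex) (use flux_last_differentiable in \<open>auto simp: real_differentiable_def\<close>)

lemma knots_in_interval:
  assumes "t \<in> I" "i \<le> Suc n"
  shows "a \<le> Q i t" "Q i t \<le> b"
  using knots_mono[of n "\<lambda>j. Q j t", OF Q_less[OF assms(1)], of 0 i]
    knots_mono[of n "\<lambda>j. Q j t", OF Q_less[OF assms(1)], of i "Suc n"] Q_ends[OF assms(1)] assms(2)
  by auto

lemma inner_knots_in_interval:
  assumes "t \<in> I" "i \<in> {1..n}"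
  shows "a < Q i t" "Q i t < b"
proof -
  have "Q 0 t < Q 1 t" "Q 1 t \<le> Q i t" "Q i t \<le> Q n t" "Q n t < Q (Suc n) t"
    using Q_less[OF assms(1)] knots_mono[of n "\<lambda>j. Q j t", OF Q_less[OF assms(1)]] assms(2) by auto
  then show "a < Q i t" "Q i t < b" using Q_ends[OF assms(1)] by auto
qed

lemma integral_between_knots:
  fixes \<phi> :: "real \<Rightarrow> real"
  assumes "t \<in> I" "i \<le> n" "continuous_on {a..b} \<phi>"
  shows "integral {Q i t..Q (Suc i) t} \<phi> = integral {a..Q (Suc i) t} \<phi> - integral {a..Q i t} \<phi>"
proof -
  have "a \<le> Q i t" "Q i t \<le> Q (Suc i) t" "Q (Suc i) t \<le> b"
    using knots_in_interval[OF assms(1), of i] knots_in_interval[OF assms(1), of "Suc i"] Q_less[OF assms(1,2)]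
      assms(2) by auto
  moreover have "continuous_on {a..Q (Suc i) t} \<phi>"
    by (rule continuous_on_subset[OF assms(3)]) (use \<open>Q (Suc i) t \<le> b\<close> in auto)
  then have "\<phi> integrable_on {a..Q (Suc i) t}"
    by (rule integrable_continuous_interval)
  ultimately show ?thesis
    by (simp add: Henstock_Kurzweil_Integration.integral_combine[symmetric])
qed

lemma integral_flux_eq:
  fixes \<phi> :: "real \<Rightarrow> real"
  assumes "s \<in> I" "continuous_on {a..b} \<phi>"
  shows "integral {a..b} (\<lambda>x. \<bar>deriv (\<lambda>y. u y s) x\<bar> ^ (r - 2) * deriv (\<lambda>y. u y s) x * \<phi> x)
    = flux n s * integral {a..b} \<phi> + (\<Sum>i\<in>{1..n}. P i s * integral {a..Q i s} \<phi>)"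
proof -
  define F where "F i = integral {a..Q i s} \<phi>" for i
  have "integral {a..b} (\<lambda>x. \<bar>deriv (\<lambda>y. u y s) x\<bar> ^ (r - 2) * deriv (\<lambda>y. u y s) x * \<phi> x)
      = (\<Sum>i\<le>n. flux i s * integral {Q i s..Q (Suc i) s} \<phi>)"
    using integral_piecewise_linear_deriv[of n "\<lambda>j. Q j s" "\<lambda>y. u y s" "\<lambda>j. uh j s" \<phi>
        "\<lambda>d. \<bar>d\<bar> ^ (r - 2) * d"] Q_less[OF assms(1)] u_eq[OF assms(1)] Q_ends[OF assms(1)] assms(2)
    by (simp add: flux_def v_def)
  also have "\<dots> = (\<Sum>i\<le>n. flux i s * (F (Suc i) - F i))"
    using integral_between_knots[OF assms(1) _ assms(2)] by (simp add: F_def)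
  also have "\<dots> = flux n s * F (Suc n) - (\<Sum>i\<in>{1..n}. (flux i s - flux (i - 1) s) * F i)"
    using summation_by_parts[of "\<lambda>i. flux i s" F n] Q_ends[OF assms(1)] by (simp add: F_def)
  also have "(\<Sum>i\<in>{1..n}. (flux i s - flux (i - 1) s) * F i) = - (\<Sum>i\<in>{1..n}. P i s * F i)"
    unfolding sum_negf[symmetric] by (rule sum.cong) (simp_all add: P_flux[OF assms(1)] algebra_simps)
  finally show ?thesis
    using Q_ends[OF assms(1)] by (simp add: F_def)
qed

lemma integral_flux_has_derivative:
  fixes \<phi> :: "real \<Rightarrow> real"
  assumes t: "t \<in> I" and \<phi>: "continuous_on {a..b} \<phi>"
  shows "((\<lambda>s. integral {a..b} (\<lambda>x. \<bar>deriv (\<lambda>y. u y s) x\<bar> ^ (r - 2) * deriv (\<lambda>y. u y s) x * \<phi> x))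
    has_real_derivative flux_rate t * integral {a..b} \<phi>
      + (\<Sum>i\<in>{1..n}. (real r - 1) / real r * (\<bar>v i t\<bar> ^ r - \<bar>v (i - 1) t\<bar> ^ r) * integral {a..Q i t} \<phi>
                     + \<phi> (Q i t) * uh i t * P i t)) (at t within I)"
proof -
  have "((\<lambda>s. P i s * integral {a..Q i s} \<phi>) has_real_derivative
      (real r - 1) / real r * (\<bar>v i t\<bar> ^ r - \<bar>v (i - 1) t\<bar> ^ r) * integral {a..Q i t} \<phi>
        + \<phi> (Q i t) * uh i t * P i t) (at t within I)" if i: "i \<in> {1..n}" for i
  proof -
    have "a < Q i t" "Q i t < b" by (rule inner_knots_in_interval[OF t i])+
    then have "((\<lambda>y. integral {a..y} \<phi>) has_real_derivative \<phi> (Q i t)) (at (Q i t) within {a..b})"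
      by (intro integral_has_real_derivative[OF \<phi>]) auto
    moreover have "at (Q i t) within {a..b} = at (Q i t)"
      by (rule at_within_interior) (use \<open>a < Q i t\<close> \<open>Q i t < b\<close> in auto)
    ultimately have "((\<lambda>y. integral {a..y} \<phi>) has_real_derivative \<phi> (Q i t)) (at (Q i t))"
      by simp
    from DERIV_mult[OF P_deriv[OF t i] DERIV_chain2[OF this Q_deriv[OF t i]]]
    show ?thesis by simp
  qed
  then have "((\<lambda>s. flux n s * integral {a..b} \<phi> + (\<Sum>i\<in>{1..n}. P i s * integral {a..Q i s} \<phi>))
    has_real_derivative flux_rate t * integral {a..b} \<phi>
      + (\<Sum>i\<in>{1..n}. (real r - 1) / real r * (\<bar>v i t\<bar> ^ r - \<bar>v (i - 1) t\<bar> ^ r) * integral {a..Q i t} \<phi>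
                     + \<phi> (Q i t) * uh i t * P i t)) (at t within I)"
    by (intro DERIV_add DERIV_cmult_right flux_rate[OF t] DERIV_sum)
  then show ?thesis
    by (rule has_field_derivative_transform_within[where d = 1]) (use t integral_flux_eq[OF _ \<phi>] in auto)
qed

lemma weak_form_rhs_eq:
  fixes \<phi> \<phi>x :: "real \<Rightarrow> real"
  assumes t: "t \<in> I" and W: "W1r0 r a b \<phi> \<phi>x"
  shows "(flux_rate t + (real r - 1) / real r * \<bar>v n t\<bar> ^ r) * integral {a..b} \<phi>
      + integral {a..b} (\<lambda>x. (1 / real r) * \<bar>deriv (\<lambda>y. u y t) x\<bar> ^ r * \<phi> x)
      + integral {a..b} (\<lambda>x. u x t * \<bar>deriv (\<lambda>y. u y t) x\<bar> ^ (r - 2) * deriv (\<lambda>y. u y t) x * \<phi>x x)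
    = flux_rate t * integral {a..b} \<phi>
      + (\<Sum>i\<in>{1..n}. (real r - 1) / real r * (\<bar>v i t\<bar> ^ r - \<bar>v (i - 1) t\<bar> ^ r) * integral {a..Q i t} \<phi>
                     + \<phi> (Q i t) * uh i t * P i t)"
proof -
  have \<phi>: "continuous_on {a..b} \<phi>" and wd: "weak_deriv_on a b \<phi> \<phi>x"
    using W by (simp_all add: W1r0_def)
  define \<kappa> where "\<kappa> = (real r - 1) / real r"
  define F where "F i = integral {a..Q i t} \<phi>" for i
  define E where "E = (\<Sum>i\<le>n. \<bar>v i t\<bar> ^ r * (F (Suc i) - F i))"
  have knots: "Q 0 t = a" "Q (Suc n) t = b" "\<And>i. i \<le> n \<Longrightarrow> Q i t < Q (Suc i) t"
    using Q_ends[OF t] Q_less[OF t] by auto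
  have pieces: "integral {Q i t..Q (Suc i) t} \<phi> = F (Suc i) - F i" if "i \<le> n" for i
    using integral_between_knots[OF t that \<phi>] by (simp add: F_def)
  have "integral {a..b} (\<lambda>x. (1 / real r) * \<bar>deriv (\<lambda>y. u y t) x\<bar> ^ r * \<phi> x)
      = (\<Sum>i\<le>n. 1 / real r * \<bar>v i t\<bar> ^ r * integral {Q i t..Q (Suc i) t} \<phi>)"
    using integral_piecewise_linear_deriv[of n "\<lambda>j. Q j t" "\<lambda>y. u y t" "\<lambda>j. uh j t" \<phi>
        "\<lambda>d. 1 / real r * \<bar>d\<bar> ^ r"] knots u_eq[OF t] \<phi> by (simp add: v_def)
  also have "\<dots> = (1 - \<kappa>) * E"
    using r(2) by (simp add: pieces E_def \<kappa>_def sum_distrib_left field_simps)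
  finally have energy: "integral {a..b} (\<lambda>x. (1 / real r) * \<bar>deriv (\<lambda>y. u y t) x\<bar> ^ r * \<phi> x) = (1 - \<kappa>) * E" .
  have "integral {a..b} (\<lambda>x. u x t * \<bar>deriv (\<lambda>y. u y t) x\<bar> ^ (r - 2) * deriv (\<lambda>y. u y t) x * \<phi>x x)
      = (\<Sum>i\<le>n. flux i t * (uh (Suc i) t * \<phi> (Q (Suc i) t) - uh i t * \<phi> (Q i t)
                              - v i t * integral {Q i t..Q (Suc i) t} \<phi>))"
    using integral_piecewise_linear_weak_deriv[of n "\<lambda>j. Q j t" "\<lambda>y. u y t" "\<lambda>j. uh j t" \<phi> \<phi>x
        "\<lambda>d. \<bar>d\<bar> ^ (r - 2) * d"] knots u_eq[OF t] \<phi> wd by (simp add: v_def flux_def mult.assoc)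
  also have "\<dots> = (\<Sum>i\<le>n. flux i t * (uh (Suc i) t * \<phi> (Q (Suc i) t) - uh i t * \<phi> (Q i t)
                              - v i t * (F (Suc i) - F i)))"
    by (simp add: pieces)
  finally have transport: "integral {a..b} (\<lambda>x. u x t * \<bar>deriv (\<lambda>y. u y t) x\<bar> ^ (r - 2) * deriv (\<lambda>y. u y t) x * \<phi>x x)
      = (\<Sum>i\<le>n. flux i t * (uh (Suc i) t * \<phi> (Q (Suc i) t) - uh i t * \<phi> (Q i t) - v i t * (F (Suc i) - F i)))" .
  have "(1 - \<kappa>) * E + (\<Sum>i\<le>n. flux i t * (uh (Suc i) t * \<phi> (Q (Suc i) t) - uh i t * \<phi> (Q i t)
          - v i t * (F (Suc i) - F i))) + \<kappa> * \<bar>v n t\<bar> ^ r * F (Suc n)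
      = (\<Sum>i\<in>{1..n}. \<kappa> * (\<bar>v i t\<bar> ^ r - \<bar>v (i - 1) t\<bar> ^ r) * F i + P i t * (uh i t * \<phi> (Q i t)))"
    unfolding E_def
    by (rule weak_form_sum_identity) (use P_flux[OF t] flux_mult_slope uh_ends[OF t] knots in \<open>simp_all add: F_def\<close>)
  also have "\<dots> = (\<Sum>i\<in>{1..n}. \<kappa> * (\<bar>v i t\<bar> ^ r - \<bar>v (i - 1) t\<bar> ^ r) * F i + \<phi> (Q i t) * uh i t * P i t)"
    by (intro sum.cong) (simp_all add: mult_ac)
  finally show ?thesis
    unfolding energy transport using knots by (simp add: F_def \<kappa>_def algebra_simps)
qed


definition multiplier :: "real \<Rightarrow> real" where
  "multiplier t = flux_rate t + (real r - 1) / real r * \<bar>v n t\<bar> ^ r"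

lemma weak_solution:
  fixes \<phi> \<phi>x :: "real \<Rightarrow> real"
  assumes "t \<in> I" "W1r0 r a b \<phi> \<phi>x"
  shows "((\<lambda>s. integral {a..b} (\<lambda>x. \<bar>deriv (\<lambda>y. u y s) x\<bar> ^ (r - 2) * deriv (\<lambda>y. u y s) x * \<phi> x))
    has_real_derivative multiplier t * integral {a..b} \<phi>
      + integral {a..b} (\<lambda>x. (1 / real r) * \<bar>deriv (\<lambda>y. u y t) x\<bar> ^ r * \<phi> x)
      + integral {a..b} (\<lambda>x. u x t * \<bar>deriv (\<lambda>y. u y t) x\<bar> ^ (r - 2) * deriv (\<lambda>y. u y t) x * \<phi>x x))
    (at t within I)"
  using integral_flux_has_derivative[OF assms(1)] weak_form_rhs_eq[OF assms] assms(2)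
  by (simp add: W1r0_def multiplier_def)

end

theorem mainTheorem9:
  fixes r n :: nat and a b :: real and I :: "real set"
    and Q P uh :: "nat \<Rightarrow> real \<Rightarrow> real" and u :: "real \<Rightarrow> real \<Rightarrow> real"
  assumes r: "even r" "r \<ge> 2"
    and ab: "a < b"
    and I: "is_interval I"
    and n: "n \<ge> 1"
    and Qends: "\<forall>t\<in>I. Q 0 t = a \<and> Q (Suc n) t = b"
    and Qmono: "\<forall>t\<in>I. \<forall>i\<le>n. Q i t < Q (Suc i) t"
    and uends: "\<forall>t\<in>I. uh 0 t = 0 \<and> uh (Suc n) t = 0"
    and Psys: "\<forall>t\<in>I. \<forall>i\<in>{1..n}.
       P i t = - (\<bar>(uh (Suc i) t - uh i t) / (Q (Suc i) t - Q i t)\<bar> ^ (r - 2)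
                   * ((uh (Suc i) t - uh i t) / (Q (Suc i) t - Q i t)))
               + \<bar>(uh i t - uh (i - 1) t) / (Q i t - Q (i - 1) t)\<bar> ^ (r - 2)
                   * ((uh i t - uh (i - 1) t) / (Q i t - Q (i - 1) t))"
    and Qode: "\<forall>t\<in>I. \<forall>i\<in>{1..n}. ((\<lambda>s. Q i s) has_real_derivative uh i t) (at t within I)"
    and Pode: "\<forall>t\<in>I. \<forall>i\<in>{1..n}. ((\<lambda>s. P i s) has_real_derivative
       ((real r - 1) / real r) *
         (\<bar>(uh (Suc i) t - uh i t) / (Q (Suc i) t - Q i t)\<bar> ^ r
          - \<bar>(uh i t - uh (i - 1) t) / (Q i t - Q (i - 1) t)\<bar> ^ r)) (at t within I)"
    and u_def: "\<forall>t\<in>I. \<forall>i\<le>n. \<forall>x\<in>{Q i t..Q (Suc i) t}.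
       u x t = uh i t + (uh (Suc i) t - uh i t) / (Q (Suc i) t - Q i t) * (x - Q i t)"
  shows "\<exists>c :: real \<Rightarrow> real. \<forall>\<phi> \<phi>x. W1r0 r a b \<phi> \<phi>x \<longrightarrow> (\<forall>t\<in>I.
     ((\<lambda>s. integral {a..b} (\<lambda>x. \<bar>deriv (\<lambda>y. u y s) x\<bar> ^ (r - 2) * deriv (\<lambda>y. u y s) x * \<phi> x))
       has_real_derivative
         (c t * integral {a..b} \<phi>
          + integral {a..b} (\<lambda>x. (1 / real r) * \<bar>deriv (\<lambda>y. u y t) x\<bar> ^ r * \<phi> x)
          + integral {a..b} (\<lambda>x. u x t * \<bar>deriv (\<lambda>y. u y t) x\<bar> ^ (r - 2)
                                  * deriv (\<lambda>y. u y t) x * \<phi>x x)))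
       (at t within I))"
proof -
  interpret piecewise_linear_flow r n a b I Q P uh "\<lambda>i t. slope (\<lambda>j. Q j t) (\<lambda>j. uh j t) i" u
    using assms by unfold_locales (auto simp: slope_def)
  show ?thesis
    by (intro exI[of _ multiplier] allI impI ballI weak_solution)
qed

end
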